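(* Let $p$ be an odd prime, $q=p^\alpha$ with $\alpha\ge1$, $a$ an integer prime to $p$, and $\epsilon\in\{+1,-1\}$. Then the $\mathrm{SL}_2(\mathbb{Z})$-module $W_1^\epsilon(L_q(a))$ is irreducible, and $q$ is the smallest positive integer $N$ such that the principal congruence subgroup $\Gamma(N)$ acts trivially on it. Moreover, for $q'=p^{\alpha'}$ with $\alpha'\ge1$, $a'$ prime to $p$ and $\epsilon'\in\{\pm1\}$, the modules $W_1^\epsilon(L_q(a))$ and $W_1^{\epsilon'}(L_{q'}(a'))$ are isomorphic if and only if $q=q'$, $\epsilon=\epsilon'$ and $aa'$ is a square modulo $p$.
   Context: $e(t)=\exp(2\pi it)$. For a finite quadratic module $M$ (finite abelian group with $Q:M\to\mathbb{Q}/\mathbb{Z}$, $Q(bx)=b^2Q(x)$, nondegenerate bilinear $B(x,y)=Q(x+y)-Q(x)-Q(y)$), put $\sigma=|M|^{-1/2}\sum_xe(-Q(x))$; $W(M)$ is the vector space with basis $\mathfrak{e}_x$ ($x\in M$) and action of $\mathrm{SL}_2(\mathbb{Z})$ (valid here since $\sigma^4=1$) determined by $T\mathfrak{e}_x=e(Q(x))\mathfrak{e}_x$, $S\mathfrak{e}_x=\sigma|M|^{-1/2}\sum_ye(-B(y,x))\mathfrak{e}_y$, $T=[1,1;0,1]$, $S=[0,-1;1,0]$. It carries the invariant scalar product with $(\mathfrak{e}_x,\mathfrak{e}_y)=\delta_{x,y}$. $L_q(a)$ is the module $\mathbb{Z}/q\mathbb{Z}$ with $Q(x)=ax^2/q$.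 For $\alpha\ge2$, $W(L_{q/p^2}(a))$ embeds $\mathrm{SL}_2(\mathbb{Z})$-equivariantly into $W(L_q(a))$ via $\mathfrak{e}_{y}\mapsto\sum_{x\in\mathbb{Z}/q\mathbb{Z},\ x\equiv py\bmod p^{\alpha-1}}\mathfrak{e}_x$ (this comes from the isotropic subgroup $U=p^{\alpha-1}L_q(a)$ with $U^\perp/U\cong L_{q/p^2}(a)$). $W_1(L_q(a))$ is the orthogonal complement of this image (and $W_1(L_q(a))=W(L_q(a))$ if $\alpha=1$). $W_1^\epsilon(L_q(a))$ is the $\epsilon$-eigenspace in $W_1(L_q(a))$ of the involution $\mathfrak{e}_x\mapsto\mathfrak{e}_{-x}$; it is an $\mathrm{SL}_2(\mathbb{Z})$-submodule. *)

theory Defs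
  imports Complex_Main "HOL-Number_Theory.Cong"
begin

definition ee :: "real \<Rightarrow> complex" where
  "ee t = exp (2 * pi * \<i> * complex_of_real t)"

type_synonym mat2 = "(int \<times> int) \<times> (int \<times> int)"

fun mmul :: "mat2 \<Rightarrow> mat2 \<Rightarrow> mat2" where
  "mmul ((a,b),(c,d)) ((a',b'),(c',d')) =
     ((a*a' + b*c', a*b' + b*d'), (c*a' + d*c', c*b' + d*d'))"

definition mid :: mat2 where "mid = ((1,0),(0,1))"

datatype gen = GenS | GenT

fun gen_mat :: "gen \<Rightarrow> mat2" where
  "gen_mat GenS = ((0,-1),(1,0))"
| "gen_mat GenT = ((1,1),(0,1))"

text \<open>Words in S and T (these generate SL_2(Z) as a monoid, since S^4 = 1 and
  T^-1 = S T S T S^3). The matrix of a word is the product of its letters.\<close>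
fun word_mat :: "gen list \<Rightarrow> mat2" where
  "word_mat [] = mid"
| "word_mat (g # w) = mmul (gen_mat g) (word_mat w)"

fun word_act :: "(gen \<Rightarrow> (int \<Rightarrow> complex) \<Rightarrow> (int \<Rightarrow> complex)) \<Rightarrow> gen list
                   \<Rightarrow> (int \<Rightarrow> complex) \<Rightarrow> (int \<Rightarrow> complex)" where
  "word_act act [] f = f"
| "word_act act (g # w) f = act g (word_act act w f)"

definition in_Gamma :: "nat \<Rightarrow> mat2 \<Rightarrow> bool" where
  "in_Gamma N M = (case M of ((a,b),(c,d)) \<Rightarrow>
      [a = 1] (mod int N) \<and> [b = 0] (mod int N) \<and> [c = 0] (mod int N) \<and> [d = 1] (mod int N))"

text \<open>W(L_q(a)), q = p^alpha: vectors sum_x f(x) e_x, encoded as q-periodic functions Z -> C.\<close>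
definition Wsp :: "nat \<Rightarrow> (int \<Rightarrow> complex) set" where
  "Wsp q = {f. \<forall>x. f (x + int q) = f x}"

definition Qform :: "nat \<Rightarrow> int \<Rightarrow> int \<Rightarrow> real" where
  "Qform q a x = real_of_int (a * x^2) / real q"

definition Bform :: "nat \<Rightarrow> int \<Rightarrow> int \<Rightarrow> int \<Rightarrow> real" where
  "Bform q a x y = Qform q a (x + y) - Qform q a x - Qform q a y"

definition sigma :: "nat \<Rightarrow> int \<Rightarrow> complex" where
  "sigma q a = (1 / complex_of_real (sqrt (real q))) * (\<Sum>x\<in>{0..<int q}. ee (- Qform q a x))"

fun weil :: "nat \<Rightarrow> int \<Rightarrow> gen \<Rightarrow> (int \<Rightarrow> complex) \<Rightarrow> (int \<Rightarrow> complex)" where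
  "weil q a GenT f = (\<lambda>x. ee (Qform q a x) * f x)"
| "weil q a GenS f = (\<lambda>y. sigma q a * (1 / complex_of_real (sqrt (real q))) *
                           (\<Sum>x\<in>{0..<int q}. ee (- Bform q a y x) * f x))"

definition wip :: "nat \<Rightarrow> (int \<Rightarrow> complex) \<Rightarrow> (int \<Rightarrow> complex) \<Rightarrow> complex" where
  "wip q f g = (\<Sum>x\<in>{0..<int q}. f x * cnj (g x))"

text \<open>Image of the basis vector e_y of W(L_{q/p^2}(a)) in W(L_q(a)), q = p^alpha:
  sum of e_x over x mod q with x = p y mod p^(alpha-1).\<close>
definition incl :: "nat \<Rightarrow> nat \<Rightarrow> int \<Rightarrow> (int \<Rightarrow> complex)" where
  "incl p \<alpha> y = (\<lambda>x. if [x = int p * y] (mod int (p ^ (\<alpha> - 1))) then 1 else 0)"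

definition W1 :: "nat \<Rightarrow> nat \<Rightarrow> (int \<Rightarrow> complex) set" where
  "W1 p \<alpha> = (if \<alpha> \<ge> 2
     then {f \<in> Wsp (p ^ \<alpha>). \<forall>y. wip (p ^ \<alpha>) f (incl p \<alpha> y) = 0}
     else Wsp (p ^ \<alpha>))"

definition W1eps :: "nat \<Rightarrow> nat \<Rightarrow> int \<Rightarrow> (int \<Rightarrow> complex) set" where
  "W1eps p \<alpha> \<epsilon> = {f \<in> W1 p \<alpha>. (\<lambda>x. f (- x)) = (\<lambda>x. of_int \<epsilon> * f x)}"

definition csubspace :: "(int \<Rightarrow> complex) set \<Rightarrow> bool" where
  "csubspace U \<longleftrightarrow> (\<lambda>_. 0) \<in> U \<and> (\<forall>f\<in>U. \<forall>g\<in>U. (\<lambda>x. f x + g x) \<in> U)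
      \<and> (\<forall>c. \<forall>f\<in>U. (\<lambda>x. c * f x) \<in> U)"

definition invariant :: "(gen \<Rightarrow> (int \<Rightarrow> complex) \<Rightarrow> (int \<Rightarrow> complex)) \<Rightarrow> (int \<Rightarrow> complex) set \<Rightarrow> bool" where
  "invariant act U \<longleftrightarrow> (\<forall>w. \<forall>f\<in>U. word_act act w f \<in> U)"

definition irreducible_mod :: "(gen \<Rightarrow> (int \<Rightarrow> complex) \<Rightarrow> (int \<Rightarrow> complex)) \<Rightarrow> (int \<Rightarrow> complex) set \<Rightarrow> bool" where
  "irreducible_mod act V \<longleftrightarrow> V \<noteq> {\<lambda>_. 0} \<and>
     (\<forall>U. csubspace U \<and> U \<subseteq> V \<and> invariant act U \<longrightarrow> U = {\<lambda>_. 0} \<or> U = V)"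

definition Gamma_trivial :: "(gen \<Rightarrow> (int \<Rightarrow> complex) \<Rightarrow> (int \<Rightarrow> complex)) \<Rightarrow> (int \<Rightarrow> complex) set \<Rightarrow> nat \<Rightarrow> bool" where
  "Gamma_trivial act V N \<longleftrightarrow> (\<forall>w. in_Gamma N (word_mat w) \<longrightarrow> (\<forall>f\<in>V. word_act act w f = f))"

definition iso_mod :: "(gen \<Rightarrow> (int \<Rightarrow> complex) \<Rightarrow> (int \<Rightarrow> complex)) \<Rightarrow> (int \<Rightarrow> complex) set \<Rightarrow>
                       (gen \<Rightarrow> (int \<Rightarrow> complex) \<Rightarrow> (int \<Rightarrow> complex)) \<Rightarrow> (int \<Rightarrow> complex) set \<Rightarrow> bool" where
  "iso_mod act1 V1 act2 V2 \<longleftrightarrow> (\<exists>\<phi>. bij_betw \<phi> V1 V2 \<and>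
     (\<forall>f\<in>V1. \<forall>g\<in>V1. \<phi> (\<lambda>x. f x + g x) = (\<lambda>x. \<phi> f x + \<phi> g x)) \<and>
     (\<forall>c. \<forall>f\<in>V1. \<phi> (\<lambda>x. c * f x) = (\<lambda>x. c * \<phi> f x)) \<and>
     (\<forall>w. \<forall>f\<in>V1. \<phi> (word_act act1 w f) = word_act act2 w (\<phi> f)))"

end

theory Submission
  imports Defs "HOL-Analysis.Complex_Transcendental" "HOL-Number_Theory.Euler_Criterion"
begin

text \<open>
  T acts diagonally on W(L_q(a)), with eigenvalue e(a x^2/q) on e_x, and on the units mod p this
  eigenvalue determines x up to sign. Hence projecting a nonzero invariant subspace U of W_1^eps
  onto T-eigenspaces yields some e_x + eps e_(-x) in U with x a unit, and the T-eigencomponents of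
  its image under S yield all of them; they span the vectors of W_1^eps supported on the units.
  A vector of W_1^eps supported on pZ is orthogonal to the image of W(L_(q/p^2)(a)), so its image
  under S is supported on the units, and S^2 = sigma^2 eps is invertible (for alpha = 1 such vectors
  are multiples of the indicator of pZ, again a T-eigencomponent of an S-image). So U = W_1^eps.

  T^N fixes e_x + eps e_(-x) only if q divides N, so the level is at least q. An element of Gamma(q)
  commutes with the Weyl operators of the Heisenberg group of L_q(a), hence acts by a scalar; the
  scalar is 1 because the element fixes the image of W(L_(q/p^2)(a)) under the equivariant map
  e_y \<mapsto> e_(py), by induction on alpha. For q = p one writes down the action of every matrix
  explicitly (in terms of normalized quadratic Gauss sums) and reads off that Gamma(p) acts trivially.

  An isomorphism preserves the eigenvalues of T^N, of T, and of S^2 = sigma^2 eps; these determine q,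
  the square class of a, and eps. Conversely, if a' = a c^2 mod q (Hensel) the dilation
  f \<mapsto> f(c \<cdot>) is an isomorphism.
\<close>

lemmas cong_iff_mod_eq = Cong.unique_euclidean_semiring_class.cong_def

definition ee_frac :: "nat \<Rightarrow> int \<Rightarrow> complex" where
  "ee_frac q r = ee (of_int r / real q)"

lemma ee_add: "ee (x + y) = ee x * ee y"
  unfolding ee_def by (simp add: distrib_left exp_add)

lemma ee_int: "ee (of_int k) = 1"
proof -
  have "exp (2 * pi * \<i> * complex_of_real (of_int k)) = exp ((2 * complex_of_int k * pi) * \<i>)"
    by (simp add: mult_ac)
  also have "\<dots> = 1" using exp_integer_2pi[of "of_int k"] by simp
  finally show ?thesis unfolding ee_def .
qed

lemma ee_eq_1_iff: "ee x = 1 \<longleftrightarrow> x \<in> \<int>"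
proof
  assume "ee x = 1"
  then have "exp (2 * pi * \<i> * complex_of_real x) = 1" by (simp add: ee_def)
  then obtain n :: int where n: "2 * pi * \<i> * complex_of_real x = 2 * pi * of_int n * \<i>"
    by (auto simp: exp_eq_1)
  then have "complex_of_real x = of_int n" by (simp add: mult_ac)
  then have "x = of_int n" by (metis of_real_eq_iff of_real_of_int_eq)
  then show "x \<in> \<int>" by simp
next
  assume "x \<in> \<int>" then obtain k where "x = of_int k" by (auto elim: Ints_cases)
  then show "ee x = 1" by (simp add: ee_int)
qed

lemma ee_nonzero: "ee x \<noteq> 0" by (simp add: ee_def)

lemma ee_cnj: "cnj (ee x) = ee (- x)"
  unfolding ee_def by (simp add: exp_cnj)

lemma ee_zero[simp]: "ee 0 = 1" by (simp add: ee_def)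

lemma ee_frac_add: "ee_frac q (r + s) = ee_frac q r * ee_frac q s"
  unfolding ee_frac_def by (simp add: add_divide_distrib ee_add)

lemma ee_frac_0[simp]: "ee_frac q 0 = 1" by (simp add: ee_frac_def)

lemma ee_frac_nonzero: "ee_frac q r \<noteq> 0" by (simp add: ee_frac_def ee_nonzero)

lemma ee_frac_cnj: "cnj (ee_frac q r) = ee_frac q (- r)" by (simp add: ee_frac_def ee_cnj)

lemma ee_frac_multiple: "q > 0 \<Longrightarrow> ee_frac q (int q * k) = 1"
  by (simp add: ee_frac_def ee_int)

lemma ee_frac_cong: assumes "q > 0" "[r = s] (mod int q)" shows "ee_frac q r = ee_frac q s"
proof -
  from assms(2) obtain k where "r = s + int q * k"
    by (metis cong_iff_lin cong_sym)
  then show ?thesis using assms(1) by (simp add: ee_frac_add ee_frac_multiple)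
qed

lemma ee_frac_eq_if_dvd: "q > 0 \<Longrightarrow> int q dvd X - Y \<Longrightarrow> ee_frac q X = ee_frac q Y"
  by (rule ee_frac_cong) (simp_all add: cong_iff_dvd_diff)

lemma ee_frac_eq_1_iff: assumes "q > 0" shows "ee_frac q r = 1 \<longleftrightarrow> int q dvd r"
proof
  assume "ee_frac q r = 1"
  then have "of_int r / real q \<in> \<int>" by (simp add: ee_frac_def ee_eq_1_iff)
  then obtain k where k: "of_int r / real q = of_int k" by (auto elim: Ints_cases)
  then have "real_of_int r = real q * of_int k" using assms by (simp add: field_simps)
  then have "r = int q * k" by (metis of_int_eq_iff of_int_mult of_int_of_nat_eq)
  then show "int q dvd r" by simp
next
  assume "int q dvd r" then obtain k where "r = int q * k" by auto
  then show "ee_frac q r = 1" using assms by (simp add: ee_frac_multiple)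
qed

lemma ee_frac_eq_iff: assumes "q > 0" shows "ee_frac q r = ee_frac q s \<longleftrightarrow> [r = s] (mod int q)"
proof -
  have "ee_frac q r = ee_frac q s \<longleftrightarrow> ee_frac q (r - s) = 1"
    using ee_frac_add[of q "r - s" s] ee_frac_nonzero[of q s] by (auto simp: field_simps)
  also have "\<dots> \<longleftrightarrow> [r = s] (mod int q)" using assms ee_frac_eq_1_iff
    by (simp add: cong_iff_dvd_diff)
  finally show ?thesis .
qed

lemma ee_frac_power: "ee_frac q (r * int k) = ee_frac q r ^ k"
  by (induction k) (simp_all add: distrib_left ee_frac_add)

lemma sum_ee_frac_geometric: assumes "q > 0"
  shows "(\<Sum>k\<in>{0..<int q}. ee_frac q (k * m)) = (if int q dvd m then of_nat q else 0)"
proof -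
  have "(\<Sum>k\<in>{0..<int q}. ee_frac q (k * m)) = (\<Sum>k\<in>{0..<q}. ee_frac q (int k * m))"
  proof -
    have "{0..<int q} = int ` {0..<q}" by (simp add: image_int_atLeastLessThan)
    then show ?thesis by (simp add: sum.reindex)
  qed
  also have "\<dots> = (\<Sum>k\<in>{0..<q}. ee_frac q m ^ k)" by (simp add: ee_frac_power mult.commute)
  finally have *: "(\<Sum>k\<in>{0..<int q}. ee_frac q (k * m)) = (\<Sum>k<q. ee_frac q m ^ k)"
    by (simp add: atLeast0LessThan)
  show ?thesis
  proof (cases "int q dvd m")
    case True
    then have "ee_frac q m = 1" using assms ee_frac_eq_1_iff by blast
    then show ?thesis using * True by simp
  next
    case False
    then have ne: "ee_frac q m \<noteq> 1" using assms ee_frac_eq_1_iff by blast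
    have "ee_frac q m ^ q = 1" using ee_frac_power[of q m q] ee_frac_multiple[of q m] assms by (simp add: mult.commute)
    then have "(\<Sum>k<q. ee_frac q m ^ k) = 0" using ne by (simp add: sum_gp_strict)
    then show ?thesis using * False by simp
  qed
qed

lemma ee_Qform: "ee (Qform q a x) = ee_frac q (a * x^2)"
  by (simp add: Qform_def ee_frac_def)

lemma ee_mQform: "ee (- Qform q a x) = ee_frac q (- (a * x^2))"
  by (simp add: Qform_def ee_frac_def)

lemma ee_mBform: "ee (- Bform q a y x) = ee_frac q (- (2 * a * y * x))"
proof -
  have "Bform q a y x = of_int (2 * a * y * x) / real q"
    by (simp add: Bform_def Qform_def power2_eq_square diff_divide_distrib[symmetric] algebra_simps)
  then show ?thesis by (simp add: ee_frac_def)
qed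

definition periodic :: "nat \<Rightarrow> (int \<Rightarrow> 'a) \<Rightarrow> bool" where
  "periodic q F \<longleftrightarrow> (\<forall>x. F (x + int q) = F x)"

lemma Wsp_iff_periodic: "f \<in> Wsp q \<longleftrightarrow> periodic q f"
  by (simp add: Wsp_def periodic_def)

lemma periodic_add_mult: assumes "periodic q F" shows "F (x + int q * k) = F x"
proof (induction k rule: int_induct[where k = 0])
  case base then show ?case by simp
next
  case (step1 i)
  have "F (x + int q * (i + 1)) = F ((x + int q * i) + int q)" by (simp add: algebra_simps)
  also have "\<dots> = F (x + int q * i)" using assms by (simp add: periodic_def)
  finally show ?case using step1 by simp
next
  case (step2 i)
  have "F (x + int q * i) = F ((x + int q * (i - 1)) + int q)" by (simp add: algebra_simps)
  also have "\<dots> = F (x + int q * (i - 1))" using assms by (simp add: periodic_def)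
  finally show ?case using step2 by simp
qed

lemma periodic_cong: assumes "periodic q F" "[x = y] (mod int q)" shows "F x = F y"
proof -
  from assms(2) obtain k where "x = y + int q * k" by (metis cong_iff_lin cong_sym)
  then show ?thesis using periodic_add_mult[OF assms(1)] by simp
qed

lemma periodic_mod: "periodic q F \<Longrightarrow> F (x mod int q) = F x"
  by (rule periodic_cong) (auto simp: cong_iff_mod_eq)

lemma sum_periodic_reindex:
  assumes q: "q > 0" and P: "periodic q F"
    and inj: "\<And>x y. x \<in> {0..<int q} \<Longrightarrow> y \<in> {0..<int q} \<Longrightarrow> [h x = h y] (mod int q) \<Longrightarrow> x = y"
  shows "(\<Sum>x\<in>{0..<int q}. F (h x)) = (\<Sum>x\<in>{0..<int q}. F x)"
proof -
  let ?g = "\<lambda>x. h x mod int q"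
  have injg: "inj_on ?g {0..<int q}"
  proof (rule inj_onI)
    fix x y assume "x \<in> {0..<int q}" "y \<in> {0..<int q}" "?g x = ?g y"
    then have "h x mod int q = h y mod int q" by simp
    then have "[h x = h y] (mod int q)" by (simp add: cong_iff_mod_eq)
    then show "x = y" using inj \<open>x \<in> _\<close> \<open>y \<in> _\<close> by blast
  qed
  have "(\<Sum>x\<in>{0..<int q}. F (h x)) = (\<Sum>x\<in>{0..<int q}. F (?g x))"
    using periodic_mod[OF P] by simp
  also have "\<dots> = (\<Sum>x\<in>?g ` {0..<int q}. F x)"
  proof (rule sum.reindex[symmetric, unfolded comp_def])
    show "inj_on ?g {0..<int q}" by (rule injg)
  qed
  also have "?g ` {0..<int q} = {0..<int q}"
  proof (rule endo_inj_surj)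
    show "inj_on ?g {0..<int q}" by (rule injg)
    show "?g ` {0..<int q} \<subseteq> {0..<int q}" using q by auto
  qed simp
  finally show ?thesis .
qed

lemma sum_periodic_affine:
  assumes q: "q > 0" and P: "periodic q F" and u: "coprime u (int q)"
  shows "(\<Sum>x\<in>{0..<int q}. F (u * x + b)) = (\<Sum>x\<in>{0..<int q}. F x)"
proof (rule sum_periodic_reindex[OF q P])
  fix x y assume xy: "x \<in> {0..<int q}" "y \<in> {0..<int q}" "[u * x + b = u * y + b] (mod int q)"
  then have "[u * x = u * y] (mod int q)" by (metis cong_add_rcancel)
  then have "[x = y] (mod int q)" using u cong_mult_lcancel by blast
  then show "x = y" using xy cong_less_imp_eq_int by auto
qed

lemma sum_periodic_shift:
  assumes q: "q > 0" and P: "periodic q F"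
  shows "(\<Sum>x\<in>{0..<int q}. F (x + b)) = (\<Sum>x\<in>{0..<int q}. F x)"
  using sum_periodic_affine[OF q P, of 1 b] by simp

lemma sum_periodic_neg:
  assumes q: "q > 0" and P: "periodic q F"
  shows "(\<Sum>x\<in>{0..<int q}. F (- x)) = (\<Sum>x\<in>{0..<int q}. F x)"
  using sum_periodic_affine[OF q P, of "-1" 0] by simp

lemma sum_split_residues:
  fixes m n :: int
  assumes "m > 0" "n > 0"
  shows "(\<Sum>x\<in>{0..<m * n}. F x) = (\<Sum>r\<in>{0..<m}. \<Sum>t\<in>{0..<n}. F (r + m * t))"
proof -
  let ?h = "\<lambda>(r, t). r + m * t"
  have bij: "bij_betw ?h ({0..<m} \<times> {0..<n}) {0..<m * n}"
  proof (rule bij_betwI[where g = "\<lambda>x. (x mod m, x div m)"])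
    show "?h \<in> {0..<m} \<times> {0..<n} \<rightarrow> {0..<m * n}"
    proof
      fix z assume "z \<in> {0..<m} \<times> {0..<n}"
      then obtain r t where z: "z = (r, t)" "0 \<le> r" "r < m" "0 \<le> t" "t < n" by auto
      have "m * t \<le> m * (n - 1)" using z assms by (intro mult_left_mono) auto
      then show "?h z \<in> {0..<m * n}" using z assms by (auto simp: algebra_simps)
    qed
    show "(\<lambda>x. (x mod m, x div m)) \<in> {0..<m * n} \<rightarrow> {0..<m} \<times> {0..<n}"
    proof
      fix x assume x: "x \<in> {0..<m * n}"
      have "x < n * m" using x by (simp add: mult.commute)
      have d: "x = m * (x div m) + x mod m" by simp
      have "x mod m \<ge> 0" using assms by simp
      have "x div m < n"
      proof (rule ccontr)
        assume "\<not> x div m < n"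
        then have "m * n \<le> m * (x div m)" using assms by (intro mult_left_mono) auto
        moreover have "m * (x div m) \<le> x" using d \<open>x mod m \<ge> 0\<close> by linarith
        ultimately show False using \<open>x < n * m\<close> by (simp add: mult.commute)
      qed
      then show "(x mod m, x div m) \<in> {0..<m} \<times> {0..<n}" using x assms by (auto simp: pos_imp_zdiv_nonneg_iff)
    qed
    show "(\<lambda>x. (x mod m, x div m)) (?h z) = z" if "z \<in> {0..<m} \<times> {0..<n}" for z
      using that assms by auto
    show "?h (x mod m, x div m) = x" if "x \<in> {0..<m * n}" for x
      by (simp add: mult.commute)
  qed
  have "(\<Sum>x\<in>{0..<m * n}. F x) = (\<Sum>z\<in>{0..<m} \<times> {0..<n}. F (?h z))"
    using sum.reindex_bij_betw[OF bij, of F] by simp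
  also have "\<dots> = (\<Sum>r\<in>{0..<m}. \<Sum>t\<in>{0..<n}. F (r + m * t))"
    by (simp add: sum.cartesian_product split_def)
  finally show ?thesis .
qed

lemma periodic_ee_frac_linear: "q > 0 \<Longrightarrow> periodic q (\<lambda>x. ee_frac q (c * x))"
  unfolding periodic_def by (intro allI ee_frac_cong) (auto simp: cong_iff_dvd_diff algebra_simps)

definition gauss_sum :: "nat \<Rightarrow> int \<Rightarrow> complex" where
  "gauss_sum q c = (\<Sum>x\<in>{0..<int q}. ee_frac q (c * x^2))"

abbreviation sqrtc :: "nat \<Rightarrow> complex" where "sqrtc q \<equiv> complex_of_real (sqrt (real q))"

lemma sqrtc_square: "sqrtc q * sqrtc q = of_nat q"
proof -
  have 1: "sqrt (real q) * sqrt (real q) = real q" by simp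
  have "sqrtc q * sqrtc q = complex_of_real (real q)" by (simp only: of_real_mult[symmetric] 1)
  then show ?thesis by simp
qed

lemma sqrtc_nonzero: "q > 0 \<Longrightarrow> sqrtc q \<noteq> 0" by simp

lemma sigma_gauss_sum: "sigma q a = gauss_sum q (- a) / sqrtc q"
  by (simp add: sigma_def gauss_sum_def ee_mQform)

lemma weil_T: "weil q a GenT f = (\<lambda>x. ee_frac q (a * x^2) * f x)"
  by (simp add: ee_Qform)

lemma weil_S: "weil q a GenS f = (\<lambda>y. sigma q a / sqrtc q * (\<Sum>x\<in>{0..<int q}. ee_frac q (- (2 * a * y * x)) * f x))"
  by (simp add: ee_mBform)

declare weil.simps[simp del]

lemma weil_linear: "weil q a g (\<lambda>x. c * f x + h x) = (\<lambda>x. c * weil q a g f x + weil q a g h x)"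
  by (cases g) (auto simp: weil_T weil_S algebra_simps sum.distrib sum_distrib_left)

lemma weil_zero: "weil q a g (\<lambda>x. 0) = (\<lambda>x. 0)"
  by (cases g) (auto simp: weil_T weil_S)

lemma word_act_linear: "word_act (weil q a) w (\<lambda>x. c * f x + h x) = (\<lambda>x. c * word_act (weil q a) w f x + word_act (weil q a) w h x)"
  by (induction w) (auto simp: weil_linear)

lemma word_act_zero: "word_act (weil q a) w (\<lambda>x. 0) = (\<lambda>x. 0)"
  by (induction w) (auto simp: weil_zero)

lemma word_act_sum: "finite I \<Longrightarrow> word_act (weil q a) w (\<lambda>x. \<Sum>i\<in>I. c i * f i x) = (\<lambda>x. \<Sum>i\<in>I. c i * word_act (weil q a) w (f i) x)"
proof (induction I rule: finite_induct)
  case empty then show ?case by (simp add: word_act_zero)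
next
  case (insert i I)
  have "word_act (weil q a) w (\<lambda>x. \<Sum>i\<in>insert i I. c i * f i x) = word_act (weil q a) w (\<lambda>x. c i * f i x + (\<Sum>i\<in>I. c i * f i x))"
    using insert by simp
  also have "\<dots> = (\<lambda>x. c i * word_act (weil q a) w (f i) x + (\<Sum>i\<in>I. c i * word_act (weil q a) w (f i) x))"
    by (simp add: word_act_linear insert.IH)
  finally show ?case using insert by simp
qed

lemma periodic_ee_frac_square: "q > 0 \<Longrightarrow> periodic q (\<lambda>x. ee_frac q (c * x^2))"
  unfolding periodic_def
  by (intro allI ee_frac_cong) (auto simp: cong_iff_dvd_diff algebra_simps power2_eq_square)

lemma weil_periodic: assumes "q > 0" "periodic q f" shows "periodic q (weil q a g f)"
proof (cases g)
  case GenS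
  have "ee_frac q (- (2 * a * (y + int q) * x)) = ee_frac q (- (2 * a * y * x))" for y x
    using assms(1) by (intro ee_frac_cong) (auto simp: cong_iff_dvd_diff algebra_simps)
  then show ?thesis using GenS by (simp add: periodic_def weil_S)
next
  case GenT
  then show ?thesis using assms periodic_ee_frac_square[OF assms(1), of a]
    by (simp add: periodic_def weil_T)
qed

lemma word_act_periodic: "q > 0 \<Longrightarrow> periodic q f \<Longrightarrow> periodic q (word_act (weil q a) w f)"
  by (induction w) (auto simp: weil_periodic)

lemma word_mat_T_power: "word_mat (replicate k GenT) = ((1, int k), (0, 1))"
  by (induction k) (auto simp: mid_def)

lemma word_act_T_power: "word_act (weil q a) (replicate k GenT) f = (\<lambda>x. ee_frac q (int k * a * x^2) * f x)"
proof (induction k)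
  case 0 then show ?case by simp
next
  case (Suc k)
  have "ee_frac q (a * x\<^sup>2) * ee_frac q (int k * a * x\<^sup>2) = ee_frac q ((1 + int k) * a * x\<^sup>2)" for x
    by (simp add: ee_frac_add[symmetric] algebra_simps)
  then show ?case using Suc by (auto simp: weil_T mult.assoc[symmetric])
qed

lemma sum_delta_mod:
  assumes q: "q > 0"
  shows "(\<Sum>x\<in>{0..<int q}. (if int q dvd (z + x) then F x else 0)) = F ((- z) mod int q)"
proof -
  have "(\<Sum>x\<in>{0..<int q}. (if int q dvd (z + x) then F x else 0)) =
        (\<Sum>x\<in>{0..<int q}. (if x = (- z) mod int q then F x else 0))"
  proof (rule sum.cong[OF refl])
    fix x assume x: "x \<in> {0..<int q}"
    have "int q dvd (z + x) \<longleftrightarrow> x = (- z) mod int q"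
    proof
      assume "int q dvd (z + x)"
      then have "[x = - z] (mod int q)" by (simp add: cong_iff_dvd_diff add.commute)
      then show "x = (- z) mod int q" using x by (simp add: cong_iff_mod_eq)
    next
      assume "x = (- z) mod int q"
      then have "[x = - z] (mod int q)" by (simp add: cong_iff_mod_eq)
      then show "int q dvd (z + x)" by (simp add: cong_iff_dvd_diff add.commute)
    qed
    then show "(if int q dvd (z + x) then F x else 0) = (if x = (- z) mod int q then F x else 0)" by simp
  qed
  also have "\<dots> = F ((- z) mod int q)" using q by (simp add: sum.delta)
  finally show ?thesis .
qed

lemma coprime_dvd_mult_cancel:
  assumes "coprime c (int q)" "int q dvd c * h" shows "int q dvd h"
  using assms by (metis coprime_commute coprime_dvd_mult_right_iff)

lemma gauss_sum_times_cnj: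
  assumes q: "q > 0" and c: "coprime (2 * c) (int q)"
  shows "gauss_sum q c * cnj (gauss_sum q c) = of_nat q"
proof -
  have P1: "periodic q (\<lambda>x. ee_frac q (c * x^2))" by (rule periodic_ee_frac_square[OF q])
  have "gauss_sum q c * cnj (gauss_sum q c) = (\<Sum>y\<in>{0..<int q}. \<Sum>x\<in>{0..<int q}. ee_frac q (c * x^2) * ee_frac q (- (c * y^2)))"
    by (simp add: gauss_sum_def sum_distrib_left sum_distrib_right ee_frac_cnj cnj_sum)
  also have "\<dots> = (\<Sum>y\<in>{0..<int q}. \<Sum>h\<in>{0..<int q}. ee_frac q (c * h^2) * ee_frac q (h * (2 * c * y)))"
  proof (rule sum.cong[OF refl])
    fix y
    have P: "periodic q (\<lambda>x. ee_frac q (c * x^2) * ee_frac q (- (c * y^2)))"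
      using P1 by (simp add: periodic_def)
    have "(\<Sum>x\<in>{0..<int q}. ee_frac q (c * x^2) * ee_frac q (- (c * y^2))) =
          (\<Sum>h\<in>{0..<int q}. ee_frac q (c * (h + y)^2) * ee_frac q (- (c * y^2)))"
      using sum_periodic_shift[OF q P, of y] by simp
    also have "\<dots> = (\<Sum>h\<in>{0..<int q}. ee_frac q (c * h^2) * ee_frac q (h * (2 * c * y)))"
      by (intro sum.cong refl) (simp add: ee_frac_add[symmetric] power2_eq_square algebra_simps)
    finally show "(\<Sum>x\<in>{0..<int q}. ee_frac q (c * x^2) * ee_frac q (- (c * y^2))) = \<dots>" .
  qed
  also have "\<dots> = (\<Sum>h\<in>{0..<int q}. ee_frac q (c * h^2) * (\<Sum>y\<in>{0..<int q}. ee_frac q (y * (2 * c * h))))"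
    by (subst sum.swap) (simp add: sum_distrib_left algebra_simps)
  also have "\<dots> = (\<Sum>h\<in>{0..<int q}. (if int q dvd (0 + h) then ee_frac q (c * h^2) * of_nat q else 0))"
  proof (rule sum.cong[OF refl])
    fix h
    have "int q dvd 2 * c * h \<longleftrightarrow> int q dvd h"
      using coprime_dvd_mult_cancel[OF c, of h] by (auto simp: mult.assoc)
    then show "ee_frac q (c * h^2) * (\<Sum>y\<in>{0..<int q}. ee_frac q (y * (2 * c * h))) = (if int q dvd (0 + h) then ee_frac q (c * h^2) * of_nat q else 0)"
      using sum_ee_frac_geometric[OF q, of "2 * c * h"] by simp
  qed
  also have "\<dots> = of_nat q"
    using sum_delta_mod[OF q, of 0 "\<lambda>h. ee_frac q (c * h^2) * of_nat q"] by simp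
  finally show ?thesis .
qed

lemma gauss_sum_nonzero: "q > 0 \<Longrightarrow> coprime (2 * c) (int q) \<Longrightarrow> gauss_sum q c \<noteq> 0"
  using gauss_sum_times_cnj[of q c] by auto

lemma sigma_nonzero: assumes "q > 0" "coprime (2 * a) (int q)" shows "sigma q a \<noteq> 0"
proof -
  have "coprime (2 * (- a)) (int q)" using assms(2) by simp
  then show ?thesis using gauss_sum_nonzero[OF assms(1)] assms(1) by (simp add: sigma_gauss_sum)
qed

lemma weil_S_S:
  assumes q: "q > 0" and c: "coprime (2 * a) (int q)" and f: "periodic q f"
  shows "weil q a GenS (weil q a GenS f) = (\<lambda>z. sigma q a ^ 2 * f (- z))"
proof
  fix z
  let ?s = "sigma q a / sqrtc q"
  have "weil q a GenS (weil q a GenS f) z =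
     ?s * ?s * (\<Sum>y\<in>{0..<int q}. \<Sum>x\<in>{0..<int q}. ee_frac q (- (2 * a * z * y)) * ee_frac q (- (2 * a * y * x)) * f x)"
    by (simp add: weil_S sum_distrib_left algebra_simps)
  also have "(\<Sum>y\<in>{0..<int q}. \<Sum>x\<in>{0..<int q}. ee_frac q (- (2 * a * z * y)) * ee_frac q (- (2 * a * y * x)) * f x)
     = (\<Sum>x\<in>{0..<int q}. f x * (\<Sum>y\<in>{0..<int q}. ee_frac q (y * (- (2 * a) * (z + x)))))"
    by (subst sum.swap) (simp add: sum_distrib_left algebra_simps ee_frac_add[symmetric])
  also have "\<dots> = (\<Sum>x\<in>{0..<int q}. (if int q dvd (z + x) then f x * of_nat q else 0))"
  proof (rule sum.cong[OF refl])
    fix x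
    have "int q dvd (- (2 * a)) * (z + x) \<longleftrightarrow> int q dvd (z + x)"
      using coprime_dvd_mult_cancel[OF c, of "z + x"] by auto
    then show "f x * (\<Sum>y\<in>{0..<int q}. ee_frac q (y * (- (2 * a) * (z + x)))) = (if int q dvd (z + x) then f x * of_nat q else 0)"
      using sum_ee_frac_geometric[OF q, of "- (2 * a) * (z + x)"] by (simp add: mult.assoc)
  qed
  also have "\<dots> = f ((- z) mod int q) * of_nat q"
    using sum_delta_mod[OF q, of z "\<lambda>x. f x * of_nat q"] by simp
  also have "\<dots> = f (- z) * of_nat q" using periodic_mod[OF f] by simp
  finally show "weil q a GenS (weil q a GenS f) z = sigma q a ^ 2 * f (- z)"
    using q sqrtc_square[of q] by (simp add: power2_eq_square field_simps)
qed

lemma sum_delta_cong: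
  assumes q: "q > 0"
  shows "(\<Sum>x\<in>{0..<int q}. (if [x = b] (mod int q) then F x else 0)) = F (b mod int q)"
  using sum_delta_mod[OF q, of "- b" F]
  by (simp add: cong_iff_dvd_diff dvd_diff_commute add.commute)

text \<open>Keep int (p ^ k) as an atom, so that moduli keep the form int q.\<close>

declare of_nat_power [simp del] of_int_power [simp del]

locale odd_prime =
  fixes p :: nat
  assumes p: "prime p" and podd: "odd p"
begin

lemma prime_int_p: "prime (int p)" using p by simp
lemma p_gt2: "p > 2" using p podd prime_gt_1_nat[OF p] by (cases "p = 2") auto
lemma p_pos: "p > 0" using p_gt2 by simp
lemma p_gt1: "p > 1" using p_gt2 by simp

lemma coprime_p_iff: "coprime x (int p) \<longleftrightarrow> \<not> int p dvd x"
proof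
  assume c: "coprime x (int p)" show "\<not> int p dvd x"
  proof
    assume "int p dvd x"
    then have "is_unit (int p)" using coprime_common_divisor[OF c, of "int p"] by simp
    then show False using prime_int_p not_prime_unit by blast
  qed
next
  assume "\<not> int p dvd x" then show "coprime x (int p)"
    using prime_int_p prime_imp_coprime coprime_commute by blast
qed

lemma p_dvd_mult_iff: "int p dvd x * y \<longleftrightarrow> int p dvd x \<or> int p dvd y"
  using prime_int_p by (simp add: prime_dvd_mult_iff)

lemma not_dvd_if_inverse: assumes "[x * y = 1] (mod int p)" shows "\<not> int p dvd y"
proof
  assume "int p dvd y"
  then have "int p dvd x * y" by simp
  then have "int p dvd 1" using assms cong_dvd_iff by blast
  then show False using p_gt2 by simp
qed

lemma p_not_dvd_2: "\<not> int p dvd 2"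
proof
  assume "int p dvd 2"
  then have "p dvd 2" by presburger
  then have "p \<le> 2" by (rule dvd_imp_le) simp
  then show False using p_gt2 by simp
qed

lemma coprime_2_p: "coprime 2 (int p)" using p_not_dvd_2 coprime_p_iff by blast

lemma p_not_dvd_1: "\<not> int p dvd 1" using p_gt1 by (simp add: zdvd1_eq)

lemma inverse_mod_p_exists: "\<not> int p dvd x \<Longrightarrow> \<exists>y. [x * y = 1] (mod int p)"
  using coprime_p_iff coprime_iff_invertible_int p_pos by (metis of_nat_0_less_iff)

lemma hensel_square:
  assumes u: "\<not> int p dvd u" and x: "[u = x^2] (mod int p)" and k: "k \<ge> 1"
  shows "\<exists>z. [u = z^2] (mod int (p ^ k))"
  using k
proof (induction k rule: dec_induct)
  case base then show ?case using x by auto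
next
  case (step k)
  then obtain z where z: "[u = z^2] (mod int (p ^ k))" by blast
  then obtain s where s: "u - z^2 = int (p ^ k) * s" by (metis cong_iff_dvd_diff dvd_def)
  have zu: "\<not> int p dvd z"
  proof
    assume "int p dvd z"
    then have "int p dvd z^2" by (simp add: power2_eq_square)
    moreover have "int p dvd u - z^2" using s step(1) by (simp add: dvd_power of_nat_power)
    ultimately show False using u by (metis dvd_diff_commute dvd_add_left_iff diff_add_cancel)
  qed
  have c2z: "coprime (2 * z) (int p)" using zu p_not_dvd_2 p_dvd_mult_iff coprime_p_iff by blast
  then obtain w where w: "[(2 * z) * w = 1] (mod int p)"
    using coprime_iff_invertible_int by blast
  \<comment> \<open>Newton step: with w the inverse of 2 z mod p, (z + p^k s w)^2 = u mod p^(k+1).\<close>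
  let ?t = "s * w"
  let ?z' = "z + int (p ^ k) * ?t"
  have "u - ?z'^2 = int (p ^ k) * (s - 2 * z * ?t) - int (p ^ k) * int (p ^ k) * ?t^2"
    using s by (simp add: power2_eq_square algebra_simps)
  moreover have "int p dvd s - 2 * z * ?t"
  proof -
    have "[s * ((2 * z) * w) = s * 1] (mod int p)" using w by (rule cong_scalar_left)
    then show ?thesis by (simp add: cong_iff_dvd_diff algebra_simps dvd_diff_commute)
  qed
  ultimately have "int (p ^ Suc k) dvd u - ?z'^2"
  proof -
    assume e: "u - ?z'^2 = int (p ^ k) * (s - 2 * z * ?t) - int (p ^ k) * int (p ^ k) * ?t^2"
      and d: "int p dvd s - 2 * z * ?t"
    have 1: "int (p ^ Suc k) dvd int (p ^ k) * (s - 2 * z * ?t)"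
      using d by (simp add: of_nat_power mult.commute mult_dvd_mono)
    have "int p ^ Suc k dvd int p ^ (k + k)" by (rule le_imp_power_dvd) (use step(1) in simp)
    then have "int (p ^ Suc k) dvd int (p ^ k) * int (p ^ k)"
      by (simp add: of_nat_power power_add[symmetric])
    then have 2: "int (p ^ Suc k) dvd int (p ^ k) * int (p ^ k) * ?t^2" by (rule dvd_mult2)
    show ?thesis using e 1 2 by (simp add: dvd_diff)
  qed
  then show ?case by (auto simp: cong_iff_dvd_diff)
qed

end

locale odd_prime_unit = odd_prime +
  fixes a :: int
  assumes ca: "coprime a (int p)"
begin

lemma p_not_dvd_a: "\<not> int p dvd a" using ca coprime_p_iff by blast

end

lemma gauss_sum_cong: assumes "q > 0" "[c = c'] (mod int q)" shows "gauss_sum q c = gauss_sum q c'"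
proof -
  have "ee_frac q (c * x^2) = ee_frac q (c' * x^2)" for x
    using assms by (intro ee_frac_cong) (auto intro: cong_mult)
  then show ?thesis by (simp add: gauss_sum_def)
qed

lemma gauss_sum_square_unit: assumes q: "q > 0" and x: "coprime x (int q)" shows "gauss_sum q (c * x^2) = gauss_sum q c"
proof -
  have "gauss_sum q (c * x^2) = (\<Sum>y\<in>{0..<int q}. ee_frac q (c * (x * y + 0)^2))"
    by (simp add: gauss_sum_def power_mult_distrib algebra_simps)
  also have "\<dots> = gauss_sum q c" unfolding gauss_sum_def by (rule sum_periodic_affine[OF q periodic_ee_frac_square[OF q] x])
  finally show ?thesis .
qed

lemma sigma_square_unit: assumes q: "q > 0" and x: "coprime x (int q)" and c: "[a' = a * x^2] (mod int q)"
  shows "sigma q a' = sigma q a"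
proof -
  have "[- a' = (- a) * x^2] (mod int q)" using c by (metis cong_minus_minus_iff minus_mult_left)
  then have "gauss_sum q (- a') = gauss_sum q (- a)" using gauss_sum_cong[OF q] gauss_sum_square_unit[OF q x] by metis
  then show ?thesis by (simp add: sigma_gauss_sum)
qed

lemma dilate_weil:
  assumes q: "q > 0" and c: "coprime c (int q)" and ac: "[a' = a * c^2] (mod int q)"
    and f: "periodic q f"
  shows "(\<lambda>y. weil q a g f (c * y)) = weil q a' g (\<lambda>y. f (c * y))"
proof (cases g)
  case GenT
  have "ee_frac q (a * (c * y)^2) = ee_frac q (a' * y^2)" for y
  proof (rule ee_frac_cong[OF q])
    have "[a * c^2 * y^2 = a' * y^2] (mod int q)" using ac by (intro cong_mult) (auto simp: cong_sym_eq)
    then show "[a * (c * y)^2 = a' * y^2] (mod int q)" by (simp add: power_mult_distrib ac_simps)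
  qed
  then show ?thesis using GenT by (simp add: weil_T fun_eq_iff)
next
  case GenS
  have sg: "sigma q a' = sigma q a" by (rule sigma_square_unit[OF q c ac])
  have "(\<Sum>x\<in>{0..<int q}. ee_frac q (- (2 * a' * y * x)) * f (c * x)) = (\<Sum>x\<in>{0..<int q}. ee_frac q (- (2 * a * (c * y) * x)) * f x)" for y
  proof -
    let ?F = "\<lambda>z. ee_frac q (- (2 * a * (c * y) * z)) * f z"
    have Fp: "periodic q ?F" using f periodic_ee_frac_linear[OF q, of "- (2 * a * (c * y))"] by (simp add: periodic_def)
    have "ee_frac q (- (2 * a' * y * x)) = ee_frac q (- (2 * a * (c * y) * (c * x + 0)))" for x
    proof (rule ee_frac_cong[OF q])
      have "[2 * a' * y * x = 2 * (a * c^2) * y * x] (mod int q)" using ac by (intro cong_mult cong_refl)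
      then show "[- (2 * a' * y * x) = - (2 * a * (c * y) * (c * x + 0))] (mod int q)"
        by (simp add: cong_minus_minus_iff power2_eq_square ac_simps)
    qed
    then have "(\<Sum>x\<in>{0..<int q}. ee_frac q (- (2 * a' * y * x)) * f (c * x)) = (\<Sum>x\<in>{0..<int q}. ?F (c * x + 0))"
      by simp
    also have "\<dots> = (\<Sum>x\<in>{0..<int q}. ?F x)" by (rule sum_periodic_affine[OF q Fp c])
    finally show ?thesis .
  qed
  then show ?thesis using GenS sg by (simp add: weil_S fun_eq_iff)
qed

lemma dilate_word_act:
  assumes q: "q > 0" and c: "coprime c (int q)" and ac: "[a' = a * c^2] (mod int q)"
    and f: "periodic q f"
  shows "(\<lambda>y. word_act (weil q a) w f (c * y)) = word_act (weil q a') w (\<lambda>y. f (c * y))"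
proof (induction w)
  case Nil then show ?case by simp
next
  case (Cons g w)
  have "periodic q (word_act (weil q a) w f)" using word_act_periodic[OF q f] .
  then have "(\<lambda>y. weil q a g (word_act (weil q a) w f) (c * y)) = weil q a' g (\<lambda>y. word_act (weil q a) w f (c * y))"
    by (rule dilate_weil[OF q c ac])
  then show ?case using Cons by simp
qed

locale W1_setting = odd_prime_unit +
  fixes \<alpha> :: nat and \<epsilon> :: int
  assumes al: "\<alpha> \<ge> 1" and eps: "\<epsilon> \<in> {1, -1}"
begin

abbreviation "q \<equiv> p ^ \<alpha>"

lemma q_pos: "q > 0" using p_gt1 by simp

lemma p_dvd_q: "int p dvd int q" using al by (simp add: dvd_power)

lemma coprime_q_if_coprime_p: "coprime x (int p) \<Longrightarrow> coprime x (int q)"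
  by (simp add: of_nat_power coprime_power_right_iff)

lemma coprime_q_if_not_dvd: "\<not> int p dvd x \<Longrightarrow> coprime x (int q)"
  using coprime_p_iff coprime_q_if_coprime_p by blast

lemma coprime_2a_q: "coprime (2 * a) (int q)"
  using coprime_q_if_coprime_p coprime_2_p ca by (simp add: coprime_mult_left_iff)

lemma eps_square: "of_int \<epsilon> * (of_int \<epsilon> :: complex) = 1" using eps by auto

lemma eps_nonzero: "(of_int \<epsilon> :: complex) \<noteq> 0" using eps by auto

lemma p_dvd_cong_q: "[x = y] (mod int q) \<Longrightarrow> int p dvd x \<longleftrightarrow> int p dvd y"
  using p_dvd_q by (metis cong_dvd_iff cong_dvd_modulus)

definition pair_vec :: "int \<Rightarrow> int \<Rightarrow> complex" where
  "pair_vec x0 = (\<lambda>y. (if [y = x0] (mod int q) then 1 else 0) + of_int \<epsilon> * (if [y = - x0] (mod int q) then 1 else 0))"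

definition parity :: "(int \<Rightarrow> complex) \<Rightarrow> bool" where
  "parity f \<longleftrightarrow> (\<forall>x. f (- x) = of_int \<epsilon> * f x)"

lemma W1eps_iff: "f \<in> W1eps p \<alpha> \<epsilon> \<longleftrightarrow> periodic q f \<and> parity f \<and> (\<alpha> \<ge> 2 \<longrightarrow> (\<forall>y. wip q f (incl p \<alpha> y) = 0))"
  by (auto simp: W1eps_def W1_def Wsp_iff_periodic parity_def fun_eq_iff)

lemma incl_nonzero_imp_dvd: assumes "\<alpha> \<ge> 2" "incl p \<alpha> y x \<noteq> 0" shows "int p dvd x"
proof -
  have "[x = int p * y] (mod int (p ^ (\<alpha> - 1)))" using assms(2) by (simp add: incl_def split: if_splits)
  moreover have "int p dvd int (p ^ (\<alpha> - 1))" using assms(1) by (simp add: dvd_power)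
  ultimately have "[x = int p * y] (mod int p)" using cong_dvd_modulus by blast
  then show ?thesis by (simp add: cong_dvd_iff)
qed

lemma wip_incl_eq_0: assumes "\<alpha> \<ge> 2" "\<And>x. int p dvd x \<Longrightarrow> f x = 0" shows "wip q f (incl p \<alpha> y) = 0"
proof -
  have "f x * cnj (incl p \<alpha> y x) = 0" for x
    using incl_nonzero_imp_dvd[OF assms(1), of y x] assms(2)[of x] by (cases "incl p \<alpha> y x = 0") auto
  then show ?thesis unfolding wip_def by (intro sum.neutral) auto
qed

lemma W1eps_if_vanishes_on_pZ: "periodic q f \<Longrightarrow> parity f \<Longrightarrow> (\<And>x. int p dvd x \<Longrightarrow> f x = 0) \<Longrightarrow> f \<in> W1eps p \<alpha> \<epsilon>"
  using wip_incl_eq_0 by (auto simp: W1eps_iff)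

lemma pair_vec_periodic: "periodic q (pair_vec x0)"
  by (simp add: periodic_def pair_vec_def cong_iff_mod_eq)

lemma pair_vec_parity: "parity (pair_vec x0)"
proof -
  have "pair_vec x0 (- x) = of_int \<epsilon> * pair_vec x0 x" for x
  proof -
    have 1: "[- x = x0] (mod int q) \<longleftrightarrow> [x = - x0] (mod int q)"
      by (metis cong_minus_minus_iff minus_minus)
    have 2: "[- x = - x0] (mod int q) \<longleftrightarrow> [x = x0] (mod int q)"
      by (simp add: cong_minus_minus_iff)
    show ?thesis using eps_square by (simp add: pair_vec_def 1 2 algebra_simps)
  qed
  then show ?thesis by (simp add: parity_def)
qed

lemma pair_vec_vanishes_on_pZ: "\<not> int p dvd x0 \<Longrightarrow> int p dvd x \<Longrightarrow> pair_vec x0 x = 0"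
proof -
  assume "\<not> int p dvd x0" "int p dvd x"
  then have "\<not> [x = x0] (mod int q)" "\<not> [x = - x0] (mod int q)"
    using p_dvd_cong_q by force+
  then show ?thesis by (simp add: pair_vec_def)
qed

lemma pair_vec_W1eps: "\<not> int p dvd x0 \<Longrightarrow> pair_vec x0 \<in> W1eps p \<alpha> \<epsilon>"
  using W1eps_if_vanishes_on_pZ pair_vec_periodic pair_vec_parity pair_vec_vanishes_on_pZ by blast

lemma not_cong_neg_self: assumes "\<not> int p dvd x0" shows "\<not> [x0 = - x0] (mod int q)"
proof
  assume "[x0 = - x0] (mod int q)"
  then have "int q dvd 2 * x0" by (simp add: cong_iff_dvd_diff)
  then have "int p dvd 2 * x0" using p_dvd_q dvd_trans by blast
  then show False using assms coprime_2_p by (metis coprime_commute coprime_dvd_mult_right_iff)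
qed

lemma pair_vec_self: "\<not> int p dvd x0 \<Longrightarrow> pair_vec x0 x0 = 1"
  using not_cong_neg_self by (simp add: pair_vec_def)

lemma pair_vec_nonzero: "\<not> int p dvd x0 \<Longrightarrow> pair_vec x0 \<noteq> (\<lambda>_. 0)"
  using pair_vec_self by (metis zero_neq_one)

lemma csubspace_smult: "csubspace U \<Longrightarrow> f \<in> U \<Longrightarrow> (\<lambda>x. c * f x) \<in> U"
  by (simp add: csubspace_def)

lemma csubspace_add: "csubspace U \<Longrightarrow> f \<in> U \<Longrightarrow> g \<in> U \<Longrightarrow> (\<lambda>x. f x + g x) \<in> U"
  by (simp add: csubspace_def)

lemma csubspace_sum: assumes "csubspace U" "finite I" "\<And>i. i \<in> I \<Longrightarrow> f i \<in> U" shows "(\<lambda>x. \<Sum>i\<in>I. c i * f i x) \<in> U"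
  using assms(2,3)
proof (induction I rule: finite_induct)
  case empty then show ?case using assms(1) by (simp add: csubspace_def)
next
  case (insert i I)
  then have "(\<lambda>x. c i * f i x + (\<Sum>i\<in>I. c i * f i x)) \<in> U"
    using csubspace_add csubspace_smult assms(1) by (metis insertCI)
  then show ?case using insert by simp
qed

lemma invariant_word_act: "invariant (weil q a) U \<Longrightarrow> f \<in> U \<Longrightarrow> word_act (weil q a) w f \<in> U"
  by (simp add: invariant_def)

lemma invariant_S: "invariant (weil q a) U \<Longrightarrow> f \<in> U \<Longrightarrow> weil q a GenS f \<in> U"
  using invariant_word_act[of U f "[GenS]"] by simp

text \<open>Averaging over the powers of T: projection onto the T-eigenspace for the eigenvalue e(c/q).\<close>

definition T_proj :: "int \<Rightarrow> (int \<Rightarrow> complex) \<Rightarrow> (int \<Rightarrow> complex)" where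
  "T_proj c f = (\<lambda>x. \<Sum>k\<in>{0..<q}. (ee_frac q (- (int k * c)) / of_nat q) * word_act (weil q a) (replicate k GenT) f x)"

lemma T_proj_in: "csubspace U \<Longrightarrow> invariant (weil q a) U \<Longrightarrow> f \<in> U \<Longrightarrow> T_proj c f \<in> U"
  unfolding T_proj_def by (rule csubspace_sum) (auto intro: invariant_word_act)

lemma T_proj_eq: "T_proj c f = (\<lambda>x. if int q dvd (a * x^2 - c) then f x else 0)"
proof
  fix x
  have e: "ee_frac q (- (int k * c)) * ee_frac q (int k * a * x^2) = ee_frac q (int k * (a * x^2 - c))" for k
    by (simp add: ee_frac_add[symmetric] algebra_simps)
  have "T_proj c f x = (\<Sum>k\<in>{0..<q}. ee_frac q (int k * (a * x^2 - c)) * f x / of_nat q)"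
    unfolding T_proj_def word_act_T_power
    by (intro sum.cong refl) (simp only: e[symmetric], simp add: field_simps)
  also have "\<dots> = (\<Sum>k\<in>{0..<q}. ee_frac q (int k * (a * x^2 - c))) * f x / of_nat q"
    by (simp add: sum_distrib_right sum_divide_distrib)
  finally have "T_proj c f x = (\<Sum>k\<in>{0..<q}. ee_frac q (int k * (a * x^2 - c))) * f x / of_nat q" .
  also have "(\<Sum>k\<in>{0..<q}. ee_frac q (int k * (a * x^2 - c))) = (\<Sum>k\<in>{0..<int q}. ee_frac q (k * (a * x^2 - c)))"
  proof -
    have "{0..<int q} = int ` {0..<q}" by (simp add: image_int_atLeastLessThan)
    then show ?thesis by (simp add: sum.reindex)
  qed
  also have "\<dots> = (if int q dvd (a * x^2 - c) then of_nat q else 0)" by (rule sum_ee_frac_geometric[OF q_pos])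
  finally show "T_proj c f x = (if int q dvd (a * x^2 - c) then f x else 0)" using q_pos by simp
qed

lemma square_cong_iff:
  assumes "\<not> int p dvd x0"
  shows "int q dvd (a * y^2 - a * x0^2) \<longleftrightarrow> [y = x0] (mod int q) \<or> [y = - x0] (mod int q)"
proof
  assume h: "int q dvd (a * y^2 - a * x0^2)"
  have "a * y^2 - a * x0^2 = a * ((y - x0) * (y + x0))" by (simp add: power2_eq_square algebra_simps)
  with h have "int q dvd (y - x0) * (y + x0)"
    using coprime_dvd_mult_cancel coprime_q_if_coprime_p ca by metis
  moreover have "\<not> (int p dvd (y - x0) \<and> int p dvd (y + x0))"
  proof
    assume "int p dvd (y - x0) \<and> int p dvd (y + x0)"
    then have "int p dvd (y + x0) - (y - x0)" using dvd_diff by blast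
    then have "int p dvd 2 * x0" by (simp add: algebra_simps)
    then show False using assms coprime_2_p by (metis coprime_commute coprime_dvd_mult_right_iff)
  qed
  ultimately have "int q dvd (y - x0) \<or> int q dvd (y + x0)"
  proof -
    assume d: "int q dvd (y - x0) * (y + x0)" and n: "\<not> (int p dvd (y - x0) \<and> int p dvd (y + x0))"
    show ?thesis
    proof (cases "int p dvd (y - x0)")
      case True
      then have "coprime (y + x0) (int q)" using n coprime_q_if_not_dvd by blast
      then show ?thesis using d coprime_dvd_mult_cancel by (metis mult.commute)
    next
      case False
      then have "coprime (y - x0) (int q)" using coprime_q_if_not_dvd by blast
      then show ?thesis using d coprime_dvd_mult_cancel by metis
    qed
  qed
  then show "[y = x0] (mod int q) \<or> [y = - x0] (mod int q)" by (simp add: cong_iff_dvd_diff)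
next
  assume "[y = x0] (mod int q) \<or> [y = - x0] (mod int q)"
  then have "int q dvd (y - x0) \<or> int q dvd (y + x0)" by (auto simp: cong_iff_dvd_diff)
  moreover have "a * y^2 - a * x0^2 = a * (y + x0) * (y - x0)" by (simp add: power2_eq_square algebra_simps)
  ultimately show "int q dvd (a * y^2 - a * x0^2)" by (metis dvd_mult dvd_mult2 mult.commute)
qed

lemma T_proj_pair_vec:
  assumes x0: "\<not> int p dvd x0" and f: "periodic q f" "parity f"
  shows "T_proj (a * x0^2) f = (\<lambda>y. f x0 * pair_vec x0 y)"
proof
  fix y
  have nc: "\<not> ([y = x0] (mod int q) \<and> [y = - x0] (mod int q))"
    using not_cong_neg_self[OF x0] by (meson cong_sym cong_trans)
  have "f (- x0) = of_int \<epsilon> * f x0" using f(2) by (simp add: parity_def)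
  then show "T_proj (a * x0^2) f y = f x0 * pair_vec x0 y"
    using nc square_cong_iff[OF x0, of y] periodic_cong[OF f(1), of y x0] periodic_cong[OF f(1), of y "- x0"]
    by (auto simp: T_proj_eq pair_vec_def)
qed

lemma parity_S: assumes "periodic q f" "parity f" shows "parity (weil q a GenS f)"
proof -
  have "weil q a GenS f (- y) = of_int \<epsilon> * weil q a GenS f y" for y
  proof -
    have P: "periodic q (\<lambda>x. ee_frac q (- (2 * a * y * x)) * f (- x))"
    proof -
      have "f (- (x + int q)) = f (- x)" for x
        using periodic_cong[OF assms(1), of "- (x + int q)" "- x"] by (simp add: cong_iff_mod_eq)
      then show ?thesis using periodic_ee_frac_linear[OF q_pos, of "- (2 * a * y)"] by (simp add: periodic_def)
    qed
    have "(\<Sum>x\<in>{0..<int q}. ee_frac q (- (2 * a * - y * x)) * f x) = (\<Sum>x\<in>{0..<int q}. ee_frac q (- (2 * a * y * - x)) * f (- (- x)))"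
      by simp
    also have "\<dots> = (\<Sum>x\<in>{0..<int q}. ee_frac q (- (2 * a * y * x)) * f (- x))"
      by (rule sum_periodic_neg[OF q_pos P])
    also have "\<dots> = of_int \<epsilon> * (\<Sum>x\<in>{0..<int q}. ee_frac q (- (2 * a * y * x)) * f x)"
      using assms(2) by (simp add: parity_def sum_distrib_left algebra_simps)
    finally show ?thesis by (simp add: weil_S algebra_simps)
  qed
  then show ?thesis by (simp add: parity_def)
qed

lemma S_pair_vec: "weil q a GenS (pair_vec x0) = (\<lambda>y. sigma q a / sqrtc q * (ee_frac q (- (2 * a * y * x0)) + of_int \<epsilon> * ee_frac q (2 * a * y * x0)))"
proof
  fix y
  have P: "periodic q (\<lambda>x. ee_frac q (- (2 * a * y * x)))"
    using periodic_ee_frac_linear[OF q_pos, of "- (2 * a * y)"] by simp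
  have e: "ee_frac q (- (2 * a * y * x)) * pair_vec x0 x = (if [x = x0] (mod int q) then ee_frac q (- (2 * a * y * x)) else 0)
     + of_int \<epsilon> * (if [x = - x0] (mod int q) then ee_frac q (- (2 * a * y * x)) else 0)" for x
    by (simp add: pair_vec_def algebra_simps)
  have "(\<Sum>x\<in>{0..<int q}. ee_frac q (- (2 * a * y * x)) * pair_vec x0 x) =
     (\<Sum>x\<in>{0..<int q}. (if [x = x0] (mod int q) then ee_frac q (- (2 * a * y * x)) else 0))
     + of_int \<epsilon> * (\<Sum>x\<in>{0..<int q}. (if [x = - x0] (mod int q) then ee_frac q (- (2 * a * y * x)) else 0))"
    unfolding e by (simp add: sum.distrib sum_distrib_left)
  also have "\<dots> = ee_frac q (- (2 * a * y * (x0 mod int q))) + of_int \<epsilon> * ee_frac q (- (2 * a * y * ((- x0) mod int q)))"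
    by (simp only: sum_delta_cong[OF q_pos])
  also have "\<dots> = ee_frac q (- (2 * a * y * x0)) + of_int \<epsilon> * ee_frac q (2 * a * y * x0)"
    using periodic_mod[OF P, of x0] periodic_mod[OF P, of "- x0"] by simp
  finally show "weil q a GenS (pair_vec x0) y = sigma q a / sqrtc q * (ee_frac q (- (2 * a * y * x0)) + of_int \<epsilon> * ee_frac q (2 * a * y * x0))"
    by (simp add: weil_S)
qed

lemma S_pair_vec_coeff_nonzero: assumes "\<not> int p dvd y" "\<not> int p dvd x0"
  shows "ee_frac q (- (2 * a * y * x0)) + of_int \<epsilon> * ee_frac q (2 * a * y * x0) \<noteq> 0"
proof
  let ?m = "2 * a * y * x0"
  assume h: "ee_frac q (- ?m) + of_int \<epsilon> * ee_frac q ?m = 0"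
  have "ee_frac q ?m * (ee_frac q (- ?m) + of_int \<epsilon> * ee_frac q ?m) = 1 + of_int \<epsilon> * ee_frac q (2 * ?m)"
    by (simp add: ee_frac_add[symmetric] algebra_simps mult_2)
  with h have "of_int \<epsilon> * ee_frac q (2 * ?m) = -1" by (simp add: algebra_simps add_eq_0_iff)
  then have "(of_int \<epsilon> * ee_frac q (2 * ?m)) * (of_int \<epsilon> * ee_frac q (2 * ?m)) = 1" by simp
  then have "(of_int \<epsilon> * of_int \<epsilon>) * (ee_frac q (2 * ?m) * ee_frac q (2 * ?m)) = 1" by (simp only: ac_simps)
  then have "ee_frac q (2 * ?m) * ee_frac q (2 * ?m) = 1" using eps_square by simp
  then have "ee_frac q (2 * ?m + 2 * ?m) = 1" by (simp only: ee_frac_add)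
  then have "int q dvd 2 * ?m + 2 * ?m" using ee_frac_eq_1_iff[OF q_pos] by blast
  then have "int q dvd 8 * (a * (y * x0))" by (simp add: ac_simps)
  then have d: "int p dvd 8 * (a * (y * x0))" using p_dvd_q dvd_trans by blast
  have c8: "coprime ((2::int)^3) (int p)" using coprime_2_p by (simp only: coprime_power_left_iff) simp
  then have c8': "coprime (8::int) (int p)" by simp
  have "coprime y (int p)" "coprime x0 (int p)" using assms coprime_p_iff by auto
  then have "coprime (8 * (a * (y * x0))) (int p)"
    using c8' ca by (simp add: coprime_mult_left_iff)
  then show False using d coprime_p_iff by blast
qed

lemma W1eps_periodic: "f \<in> W1eps p \<alpha> \<epsilon> \<Longrightarrow> periodic q f" by (simp add: W1eps_iff)
lemma W1eps_parity: "f \<in> W1eps p \<alpha> \<epsilon> \<Longrightarrow> parity f" by (simp add: W1eps_iff)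

lemma weil_S_periodic: "periodic q f \<Longrightarrow> periodic q (weil q a GenS f)"
  using weil_periodic[OF q_pos] by blast

lemma all_pair_vecs_in:
  assumes U: "csubspace U" "invariant (weil q a) U" and x0: "pair_vec x0 \<in> U" "\<not> int p dvd x0"
    and y: "\<not> int p dvd y"
  shows "pair_vec y \<in> U"
proof -
  let ?g = "weil q a GenS (pair_vec x0)"
  have g: "?g \<in> U" using invariant_S[OF U(2) x0(1)] .
  have gp: "periodic q ?g" using weil_S_periodic pair_vec_periodic by blast
  have gpar: "parity ?g" using parity_S pair_vec_periodic pair_vec_parity by blast
  have "T_proj (a * y^2) ?g \<in> U" using T_proj_in[OF U g] .
  then have 1: "(\<lambda>z. ?g y * pair_vec y z) \<in> U" using T_proj_pair_vec[OF y gp gpar] by simp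
  have "?g y \<noteq> 0"
    using sigma_nonzero[OF q_pos coprime_2a_q] sqrtc_nonzero[OF q_pos] S_pair_vec_coeff_nonzero[OF y x0(2)] by (simp add: S_pair_vec)
  then have "(\<lambda>z. inverse (?g y) * (?g y * pair_vec y z)) = pair_vec y" by (simp add: fun_eq_iff)
  then show ?thesis using csubspace_smult[OF U(1) 1, of "inverse (?g y)"] by simp
qed

definition unit_reps :: "int set" where "unit_reps = {x0 \<in> {0..<int q}. \<not> int p dvd x0}"

lemma finite_unit_reps: "finite unit_reps"
  by (rule finite_subset[of _ "{0..<int q}"]) (auto simp: unit_reps_def)

lemma sum_unit_reps: "(\<Sum>x0\<in>unit_reps. h x0) = (\<Sum>x0\<in>{0..<int q}. if \<not> int p dvd x0 then h x0 else 0)"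
  unfolding unit_reps_def by (rule sum.inter_filter) simp

lemma unit_part_eq_sum_pair_vecs:
  assumes f: "periodic q f" "parity f"
  shows "(\<lambda>x. if int p dvd x then 0 else f x) = (\<lambda>x. \<Sum>x0\<in>unit_reps. (f x0 / 2) * pair_vec x0 x)"
proof
  fix x
  have A: "(\<Sum>x0\<in>unit_reps. (if [x0 = x] (mod int q) then f x0 else 0)) = (if int p dvd x then 0 else f x)"
  proof -
    have "(\<Sum>x0\<in>unit_reps. (if [x0 = x] (mod int q) then f x0 else 0)) =
          (\<Sum>x0\<in>{0..<int q}. if [x0 = x] (mod int q) then (if int p dvd x then 0 else f x0) else 0)"
      unfolding sum_unit_reps by (intro sum.cong refl) (auto dest: p_dvd_cong_q)
    also have "\<dots> = (if int p dvd x then 0 else f (x mod int q))" by (rule sum_delta_cong[OF q_pos])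
    finally show ?thesis using periodic_mod[OF f(1)] by simp
  qed
  have B: "(\<Sum>x0\<in>unit_reps. (if [x0 = - x] (mod int q) then f x0 else 0)) = (if int p dvd x then 0 else of_int \<epsilon> * f x)"
  proof -
    have "(\<Sum>x0\<in>unit_reps. (if [x0 = - x] (mod int q) then f x0 else 0)) =
          (\<Sum>x0\<in>{0..<int q}. if [x0 = - x] (mod int q) then (if int p dvd x then 0 else f x0) else 0)"
      unfolding sum_unit_reps by (intro sum.cong refl) (auto dest: p_dvd_cong_q)
    also have "\<dots> = (if int p dvd x then 0 else f ((- x) mod int q))" by (rule sum_delta_cong[OF q_pos])
    finally show ?thesis using periodic_mod[OF f(1)] f(2) by (simp add: parity_def)
  qed
  have C: "[x = x0] (mod int q) \<longleftrightarrow> [x0 = x] (mod int q)" "[x = - x0] (mod int q) \<longleftrightarrow> [x0 = - x] (mod int q)" for x0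
    by (auto simp: cong_sym_eq) (metis cong_minus_minus_iff minus_minus cong_sym)+
  have D: "(f x0 / 2) * pair_vec x0 x = ((if [x0 = x] (mod int q) then f x0 else 0) + of_int \<epsilon> * (if [x0 = - x] (mod int q) then f x0 else 0)) / 2" for x0
    using C[of x0] by (auto simp: pair_vec_def algebra_simps cong_sym_eq)
  have "(\<Sum>x0\<in>unit_reps. (f x0 / 2) * pair_vec x0 x) =
      ((\<Sum>x0\<in>unit_reps. (if [x0 = x] (mod int q) then f x0 else 0)) + of_int \<epsilon> * (\<Sum>x0\<in>unit_reps. (if [x0 = - x] (mod int q) then f x0 else 0))) / 2"
    unfolding D by (simp add: sum_divide_distrib[symmetric] sum.distrib sum_distrib_left)
  also have "\<dots> = (if int p dvd x then 0 else f x)" using A B eps_square by (simp add: algebra_simps)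
  finally show "(if int p dvd x then 0 else f x) = (\<Sum>x0\<in>unit_reps. (f x0 / 2) * pair_vec x0 x)" by simp
qed

lemma in_subspace_if_vanishes_on_pZ:
  assumes U: "csubspace U" and allu: "\<And>y. \<not> int p dvd y \<Longrightarrow> pair_vec y \<in> U"
    and h: "periodic q h" "parity h" "\<And>x. int p dvd x \<Longrightarrow> h x = 0"
  shows "h \<in> U"
proof -
  have "h = (\<lambda>x. if int p dvd x then 0 else h x)" using h(3) by auto
  also have "\<dots> = (\<lambda>x. \<Sum>x0\<in>unit_reps. (h x0 / 2) * pair_vec x0 x)" by (rule unit_part_eq_sum_pair_vecs[OF h(1,2)])
  finally have e: "h = (\<lambda>x. \<Sum>x0\<in>unit_reps. (h x0 / 2) * pair_vec x0 x)" .
  have "(\<lambda>x. \<Sum>x0\<in>unit_reps. (h x0 / 2) * pair_vec x0 x) \<in> U"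
    by (rule csubspace_sum[OF U finite_unit_reps]) (use allu in \<open>auto simp: unit_reps_def\<close>)
  then show ?thesis using e by simp
qed

lemma q_split: "\<alpha> \<ge> 2 \<Longrightarrow> int q = int (p ^ (\<alpha> - 1)) * int p"
  by (metis One_nat_def Suc_diff_le Suc_le_lessD diff_Suc_1 le_add_diff_inverse2 numeral_2_eq_2
      of_nat_mult power_Suc2 less_imp_le_nat)

lemma p_dvd_m: "\<alpha> \<ge> 2 \<Longrightarrow> int p dvd int (p ^ (\<alpha> - 1))"
  by (simp add: dvd_power)

lemma m_pos: "int (p ^ (\<alpha> - 1)) > 0" using p_gt1 by simp

lemma fibre_sum_eq_0:
  assumes a2: "\<alpha> \<ge> 2" and g: "g \<in> W1eps p \<alpha> \<epsilon>" and g_pZ: "\<And>x. \<not> int p dvd x \<Longrightarrow> g x = 0"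
    and r: "r \<in> {0..<int (p ^ (\<alpha> - 1))}"
  shows "(\<Sum>t\<in>{0..<int p}. g (r + int (p ^ (\<alpha> - 1)) * t)) = 0"
proof (cases "int p dvd r")
  case False
  have "\<not> int p dvd r + int (p ^ (\<alpha> - 1)) * t" for t
    using False p_dvd_m[OF a2] by (metis dvd_add_left_iff dvd_mult2)
  then show ?thesis using g_pZ by simp
next
  case True
  let ?m = "int (p ^ (\<alpha> - 1))"
  let ?y = "r div int p"
  have ry: "int p * ?y = r" using True by simp
  have "wip q g (incl p \<alpha> ?y) = 0" using g a2 by (simp add: W1eps_iff)
  moreover have "wip q g (incl p \<alpha> ?y) = (\<Sum>t\<in>{0..<int p}. g (r + ?m * t))"
  proof -
    have "wip q g (incl p \<alpha> ?y) = (\<Sum>x\<in>{0..<?m * int p}. g x * cnj (incl p \<alpha> ?y x))"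
      unfolding wip_def q_split[OF a2] ..
    also have "\<dots> = (\<Sum>r'\<in>{0..<?m}. \<Sum>t\<in>{0..<int p}. g (r' + ?m * t) * cnj (incl p \<alpha> ?y (r' + ?m * t)))"
      by (rule sum_split_residues) (use m_pos p_gt1 in auto)
    also have "\<dots> = (\<Sum>r'\<in>{0..<?m}. if r' = r then (\<Sum>t\<in>{0..<int p}. g (r + ?m * t)) else 0)"
    proof (intro sum.cong refl)
      fix r' assume r': "r' \<in> {0..<?m}"
      have "incl p \<alpha> ?y (r' + ?m * t) = (if r' = r then 1 else 0)" for t
      proof -
        have "[r' + ?m * t = int p * ?y] (mod ?m) \<longleftrightarrow> [r' = r] (mod ?m)"
          using ry by (simp add: cong_iff_mod_eq)
        also have "\<dots> \<longleftrightarrow> r' = r" using r r' by (auto intro: cong_less_imp_eq_int)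
        finally show ?thesis by (simp add: incl_def)
      qed
      then show "(\<Sum>t\<in>{0..<int p}. g (r' + ?m * t) * cnj (incl p \<alpha> ?y (r' + ?m * t))) =
          (if r' = r then (\<Sum>t\<in>{0..<int p}. g (r + ?m * t)) else 0)" by simp
    qed
    also have "\<dots> = (\<Sum>t\<in>{0..<int p}. g (r + ?m * t))" using r by (simp add: sum.delta)
    finally show ?thesis .
  qed
  ultimately show ?thesis by simp
qed

lemma S_vanishes_on_pZ:
  assumes a2: "\<alpha> \<ge> 2" and g: "g \<in> W1eps p \<alpha> \<epsilon>" and g_pZ: "\<And>x. \<not> int p dvd x \<Longrightarrow> g x = 0"
    and y: "int p dvd y"
  shows "weil q a GenS g y = 0"
proof -
  let ?m = "int (p ^ (\<alpha> - 1))"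
  from y obtain y1 where y1: "y = int p * y1" by auto
  have e: "ee_frac q (- (2 * a * y * (r + ?m * t))) = ee_frac q (- (2 * a * y * r))" for r t
  proof (rule ee_frac_cong[OF q_pos])
    have "- (2 * a * y * (r + ?m * t)) - (- (2 * a * y * r)) = int q * (- (2 * a * y1 * t))"
      using q_split[OF a2] y1 by (simp add: algebra_simps)
    then show "[- (2 * a * y * (r + ?m * t)) = - (2 * a * y * r)] (mod int q)"
      by (simp add: cong_iff_dvd_diff)
  qed
  have "(\<Sum>x\<in>{0..<int q}. ee_frac q (- (2 * a * y * x)) * g x) =
        (\<Sum>x\<in>{0..<?m * int p}. ee_frac q (- (2 * a * y * x)) * g x)" unfolding q_split[OF a2] ..
  also have "\<dots> = (\<Sum>r\<in>{0..<?m}. \<Sum>t\<in>{0..<int p}. ee_frac q (- (2 * a * y * (r + ?m * t))) * g (r + ?m * t))"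
    by (rule sum_split_residues) (use m_pos p_gt1 in auto)
  also have "\<dots> = (\<Sum>r\<in>{0..<?m}. ee_frac q (- (2 * a * y * r)) * (\<Sum>t\<in>{0..<int p}. g (r + ?m * t)))"
    by (simp only: e sum_distrib_left)
  also have "\<dots> = 0" using fibre_sum_eq_0[OF a2 g g_pZ] by simp
  finally show ?thesis by (simp add: weil_S)
qed

lemma weil_S_S_parity:
  assumes f: "periodic q f" "parity f"
  shows "weil q a GenS (weil q a GenS f) = (\<lambda>z. sigma q a ^ 2 * of_int \<epsilon> * f z)"
proof -
  have "f (- z) = of_int \<epsilon> * f z" for z using f(2) by (simp add: parity_def)
  then show ?thesis using weil_S_S[OF q_pos coprime_2a_q f(1)] by (simp add: fun_eq_iff mult.assoc)
qed

lemma in_subspace_if_S_in: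
  assumes U: "csubspace U" "invariant (weil q a) U" and f: "periodic q f" "parity f"
    and h: "weil q a GenS f \<in> U"
  shows "f \<in> U"
proof -
  have "weil q a GenS (weil q a GenS f) \<in> U" using invariant_S[OF U(2) h] .
  then have 1: "(\<lambda>z. sigma q a ^ 2 * of_int \<epsilon> * f z) \<in> U" using weil_S_S_parity[OF f] by simp
  obtain c where c: "c = sigma q a ^ 2 * of_int \<epsilon>" by blast
  have nz: "c \<noteq> 0" using sigma_nonzero[OF q_pos coprime_2a_q] eps_nonzero c by simp
  have "(\<lambda>z. inverse c * (c * f z)) = f"
    using nz by (simp add: fun_eq_iff)
  then show ?thesis using csubspace_smult[OF U(1) 1[folded c], of "inverse c"] by simp
qed

lemma in_subspace_if_supported_on_pZ:
  assumes a2: "\<alpha> \<ge> 2" and U: "csubspace U" "invariant (weil q a) U"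
    and allu: "\<And>y. \<not> int p dvd y \<Longrightarrow> pair_vec y \<in> U"
    and g: "g \<in> W1eps p \<alpha> \<epsilon>" and g_pZ: "\<And>x. \<not> int p dvd x \<Longrightarrow> g x = 0"
  shows "g \<in> U"
proof -
  have gp: "periodic q g" "parity g" using g W1eps_periodic W1eps_parity by auto
  have "weil q a GenS g \<in> U"
    using in_subspace_if_vanishes_on_pZ[OF U(1) allu weil_S_periodic[OF gp(1)] parity_S[OF gp] S_vanishes_on_pZ[OF a2 g g_pZ]] by blast
  then show ?thesis using in_subspace_if_S_in[OF U gp] by blast
qed

lemma split_units_pZ: fixes f :: "int \<Rightarrow> complex" shows
  "f = (\<lambda>x. (if int p dvd x then 0 else f x) + (if int p dvd x then f x else 0))" by (rule ext) simp

lemma periodic_restrict: assumes "periodic q f" shows "periodic q (\<lambda>x. if int p dvd x then 0 else f x)" "periodic q (\<lambda>x. if int p dvd x then f x else 0)"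
proof -
  have "int p dvd x + int q \<longleftrightarrow> int p dvd x" for x using p_dvd_q by (simp add: dvd_add_left_iff)
  then show "periodic q (\<lambda>x. if int p dvd x then 0 else f x)" "periodic q (\<lambda>x. if int p dvd x then f x else 0)"
    using assms by (auto simp: periodic_def)
qed

lemma parity_restrict: assumes "parity f" shows "parity (\<lambda>x. if int p dvd x then 0 else f x)" "parity (\<lambda>x. if int p dvd x then f x else 0)"
  using assms by (auto simp: parity_def)

text \<open>Up to a nonzero factor, the indicator of pZ is the T-eigencomponent of S (pair_vec 1) for
  the eigenvalue 1.\<close>

lemma pZ_indicator_in_subspace:
  assumes a1: "\<alpha> = 1" and e1: "\<epsilon> = 1"
    and U: "csubspace U" "invariant (weil q a) U"
    and allu: "\<And>y. \<not> int p dvd y \<Longrightarrow> pair_vec y \<in> U"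
  shows "(\<lambda>y. if int p dvd y then 1 else 0) \<in> U"
proof -
  have q_eq_p_p_q': "q = p" using a1 by simp
  let ?h = "weil q a GenS (pair_vec 1)"
  have hU: "?h \<in> U" using invariant_S[OF U(2) allu[OF p_not_dvd_1]] .
  have hp: "periodic q ?h" using weil_S_periodic pair_vec_periodic by blast
  have "?h 0 = sigma q a / sqrtc q * (1 + of_int \<epsilon>)" by (simp add: S_pair_vec)
  then have h0: "?h 0 = sigma q a / sqrtc q * 2" using e1 by simp
  have "T_proj 0 ?h = (\<lambda>y. ?h 0 * (if int p dvd y then 1 else 0))"
  proof
    fix y
    have "int p dvd a * y^2 \<longleftrightarrow> int p dvd y"
      using p_not_dvd_a by (simp add: p_dvd_mult_iff power2_eq_square)
    moreover have "int p dvd y \<Longrightarrow> ?h y = ?h 0"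
      using periodic_cong[OF hp, of y 0] q_eq_p_p_q' by (simp add: cong_iff_dvd_diff)
    ultimately show "T_proj 0 ?h y = ?h 0 * (if int p dvd y then 1 else 0)" using q_eq_p_p_q' by (simp add: T_proj_eq)
  qed
  moreover have "T_proj 0 ?h \<in> U" using T_proj_in[OF U hU] .
  ultimately have 1: "(\<lambda>y. ?h 0 * (if int p dvd y then 1 else 0)) \<in> U" by simp
  have "?h 0 \<noteq> 0" using h0 sigma_nonzero[OF q_pos coprime_2a_q] sqrtc_nonzero[OF q_pos] by simp
  then have "(\<lambda>y. inverse (?h 0) * (?h 0 * (if int p dvd y then 1 else 0))) = (\<lambda>y. if int p dvd y then 1 else 0)"
    by (simp add: fun_eq_iff)
  then show ?thesis using csubspace_smult[OF U(1) 1, of "inverse (?h 0)"] by simp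
qed

lemma W1eps_subset_subspace:
  assumes U: "csubspace U" "invariant (weil q a) U"
    and allu: "\<And>y. \<not> int p dvd y \<Longrightarrow> pair_vec y \<in> U"
    and f: "f \<in> W1eps p \<alpha> \<epsilon>"
  shows "f \<in> U"
proof -
  have fp: "periodic q f" "parity f" using f W1eps_periodic W1eps_parity by auto
  let ?u = "\<lambda>x. if int p dvd x then 0 else f x"
  let ?g = "\<lambda>x. if int p dvd x then f x else 0"
  have u: "?u \<in> U"
    by (rule in_subspace_if_vanishes_on_pZ[OF U(1) allu periodic_restrict(1)[OF fp(1)] parity_restrict(1)[OF fp(2)]])
      auto
  have g: "?g \<in> U"
  proof (cases "\<alpha> \<ge> 2")
    case True
    have "wip q ?g (incl p \<alpha> y) = wip q f (incl p \<alpha> y)" for y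
      unfolding wip_def by (intro sum.cong refl) (use incl_nonzero_imp_dvd[OF True] in force)
    then have "?g \<in> W1eps p \<alpha> \<epsilon>"
      using f periodic_restrict(2)[OF fp(1)] parity_restrict(2)[OF fp(2)] by (simp add: W1eps_iff)
    then show ?thesis using in_subspace_if_supported_on_pZ[OF True U allu] by auto
  next
    case False
    then have a1: "\<alpha> = 1" using al by simp
    have g0: "?g = (\<lambda>x. f 0 * (if int p dvd x then 1 else 0))"
    proof
      fix x show "?g x = f 0 * (if int p dvd x then 1 else 0)"
        using periodic_cong[OF fp(1), of x 0] a1 by (auto simp: cong_iff_dvd_diff)
    qed
    show ?thesis
    proof (cases "f 0 = 0")
      case True
      then show ?thesis using g0 U(1) by (simp add: csubspace_def)
    next
      case False
      have "f 0 = of_int \<epsilon> * f 0" using fp(2) parity_def by (metis minus_zero)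
      then have "\<epsilon> = 1" using False eps by auto
      then show ?thesis
        using g0 csubspace_smult[OF U(1) pZ_indicator_in_subspace[OF a1 _ U allu], of "f 0"] by simp
    qed
  qed
  have "(\<lambda>x. ?u x + ?g x) \<in> U" using csubspace_add[OF U(1) u g] .
  then show ?thesis using split_units_pZ[of f] by simp
qed

lemma pair_vec_in_if_nonzero:
  assumes U: "csubspace U" "invariant (weil q a) U" and h: "h \<in> U" "periodic q h" "parity h"
    and x: "\<not> int p dvd x" "h x \<noteq> 0"
  shows "pair_vec x \<in> U"
proof -
  have "T_proj (a * x^2) h \<in> U" using T_proj_in[OF U h(1)] .
  then have 1: "(\<lambda>y. h x * pair_vec x y) \<in> U" using T_proj_pair_vec[OF x(1) h(2,3)] by simp
  have "(\<lambda>y. inverse (h x) * (h x * pair_vec x y)) = pair_vec x" using x(2) by (simp add: fun_eq_iff)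
  then show ?thesis using csubspace_smult[OF U(1) 1, of "inverse (h x)"] by simp
qed

text \<open>For alpha >= 2, S f vanishes on pZ and S is injective; for alpha = 1, f is a multiple
  of the delta function at 0, whose image under S is constant.\<close>

lemma S_nonzero_on_unit:
  assumes f: "f \<in> W1eps p \<alpha> \<epsilon>" "f \<noteq> (\<lambda>_. 0)" and f_pZ: "\<And>x. \<not> int p dvd x \<Longrightarrow> f x = 0"
  obtains y where "\<not> int p dvd y" "weil q a GenS f y \<noteq> 0"
proof -
  have fp: "periodic q f" "parity f" using f W1eps_periodic W1eps_parity by auto
  let ?g = "weil q a GenS f"
  have "\<exists>y. \<not> int p dvd y \<and> ?g y \<noteq> 0"
  proof (cases "\<alpha> \<ge> 2")
    case True
    have "?g \<noteq> (\<lambda>_. 0)"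
    proof
      assume "?g = (\<lambda>_. 0)"
      then have "weil q a GenS ?g = (\<lambda>_. 0)" by (simp add: weil_zero)
      then have "(\<lambda>z. sigma q a ^ 2 * of_int \<epsilon> * f z) = (\<lambda>_. 0)" using weil_S_S_parity[OF fp] by simp
      then have "f = (\<lambda>_. 0)" using sigma_nonzero[OF q_pos coprime_2a_q] eps_nonzero by (simp add: fun_eq_iff)
      then show False using f(2) by simp
    qed
    then obtain y where "?g y \<noteq> 0" by auto
    moreover have "\<not> int p dvd y" using S_vanishes_on_pZ[OF True f(1) f_pZ] calculation by blast
    ultimately show ?thesis by blast
  next
    case False
    then have "\<alpha> = 1" using al by simp
    then have q_eq_p_p_q': "q = p" by simp
    obtain x where x: "f x \<noteq> 0" using f(2) by auto
    then have "int p dvd x" using f_pZ by blast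
    then have f0: "f 0 \<noteq> 0" using x periodic_cong[OF fp(1), of x 0] q_eq_p_p_q' by (simp add: cong_iff_dvd_diff)
    have "(\<Sum>x\<in>{0..<int q}. ee_frac q (- (2 * a * 1 * x)) * f x) = (\<Sum>x\<in>{0..<int q}. if x = 0 then f 0 else 0)"
    proof (intro sum.cong refl)
      fix x assume "x \<in> {0..<int q}"
      then have "x \<noteq> 0 \<Longrightarrow> \<not> int p dvd x" using q_eq_p_p_q' by (auto simp: zdvd_not_zless)
      then show "ee_frac q (- (2 * a * 1 * x)) * f x = (if x = 0 then f 0 else 0)" using f_pZ by auto
    qed
    also have "\<dots> = f 0" using q_pos by simp
    finally have "?g 1 = sigma q a / sqrtc q * f 0" by (simp add: weil_S)
    then have "?g 1 \<noteq> 0" using f0 sigma_nonzero[OF q_pos coprime_2a_q] sqrtc_nonzero[OF q_pos] by simp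
    then show ?thesis using p_not_dvd_1 by blast
  qed
  then show ?thesis using that by blast
qed

lemma subspace_contains_pair_vec:
  assumes U: "csubspace U" "invariant (weil q a) U" "U \<subseteq> W1eps p \<alpha> \<epsilon>" "U \<noteq> {\<lambda>_. 0}"
  obtains x0 where "\<not> int p dvd x0" "pair_vec x0 \<in> U"
proof -
  have "(\<lambda>_. 0) \<in> U" using U(1) by (simp add: csubspace_def)
  then obtain f where f: "f \<in> U" "f \<noteq> (\<lambda>_. 0)" using U(4) by blast
  have fV: "f \<in> W1eps p \<alpha> \<epsilon>" using f U(3) by blast
  have fp: "periodic q f" "parity f" using fV W1eps_periodic W1eps_parity by auto
  show ?thesis
  proof (cases "\<exists>x. \<not> int p dvd x \<and> f x \<noteq> 0")
    case True
    then obtain x where "\<not> int p dvd x" "f x \<noteq> 0" by blast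
    then show ?thesis using pair_vec_in_if_nonzero[OF U(1,2) f(1) fp] that by blast
  next
    case False
    then obtain y where "\<not> int p dvd y" "weil q a GenS f y \<noteq> 0"
      using S_nonzero_on_unit[OF fV f(2)] by blast
    then show ?thesis
      using pair_vec_in_if_nonzero[OF U(1,2) invariant_S[OF U(2) f(1)] weil_S_periodic[OF fp(1)] parity_S[OF fp]]
        that by blast
  qed
qed

theorem W1eps_irreducible: "irreducible_mod (weil q a) (W1eps p \<alpha> \<epsilon>)"
proof -
  have "W1eps p \<alpha> \<epsilon> \<noteq> {\<lambda>_. 0}" using pair_vec_W1eps[OF p_not_dvd_1] pair_vec_nonzero[OF p_not_dvd_1] by auto
  moreover have "U = {\<lambda>_. 0} \<or> U = W1eps p \<alpha> \<epsilon>"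
    if U: "csubspace U" "U \<subseteq> W1eps p \<alpha> \<epsilon>" "invariant (weil q a) U" for U
  proof (cases "U = {\<lambda>_. 0}")
    case False
    obtain x0 where x0: "\<not> int p dvd x0" "pair_vec x0 \<in> U" using subspace_contains_pair_vec[OF U(1,3,2) False] by blast
    have allu: "pair_vec y \<in> U" if "\<not> int p dvd y" for y using all_pair_vecs_in[OF U(1,3) x0(2,1) that] .
    have "W1eps p \<alpha> \<epsilon> \<subseteq> U" using W1eps_subset_subspace[OF U(1,3) allu] by blast
    then show ?thesis using U(2) by blast
  qed simp
  ultimately show ?thesis by (auto simp: irreducible_mod_def)
qed

theorem Gamma_trivial_level_le:
  assumes N: "N > 0" and G: "Gamma_trivial (weil q a) (W1eps p \<alpha> \<epsilon>) N"
  shows "q \<le> N"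
proof -
  have "in_Gamma N (word_mat (replicate N GenT))" by (simp add: word_mat_T_power in_Gamma_def cong_iff_mod_eq)
  then have "word_act (weil q a) (replicate N GenT) (pair_vec 1) = pair_vec 1"
    using G pair_vec_W1eps[OF p_not_dvd_1] by (auto simp: Gamma_trivial_def)
  then have "ee_frac q (int N * a * 1^2) * pair_vec 1 1 = pair_vec 1 1" by (metis word_act_T_power)
  then have "ee_frac q (int N * a) = 1" using pair_vec_self[OF p_not_dvd_1] by simp
  then have "int q dvd int N * a" using ee_frac_eq_1_iff[OF q_pos] by blast
  then have "int q dvd int N" using coprime_dvd_mult_cancel coprime_q_if_coprime_p ca by (metis mult.commute)
  then have "q dvd N" by presburger
  then show ?thesis using N by (rule dvd_imp_le)
qed

lemma T_power_pair_vec: "word_act (weil q a) (replicate k GenT) (pair_vec x0) = (\<lambda>x. ee_frac q (int k * a * x0^2) * pair_vec x0 x)"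
proof
  fix x
  show "word_act (weil q a) (replicate k GenT) (pair_vec x0) x = ee_frac q (int k * a * x0^2) * pair_vec x0 x"
  proof (cases "pair_vec x0 x = 0")
    case True then show ?thesis by (simp add: word_act_T_power)
  next
    case False
    then have "[x = x0] (mod int q) \<or> [x = - x0] (mod int q)" by (auto simp: pair_vec_def split: if_splits)
    then have "[x^2 = x0^2] (mod int q)" by (metis cong_pow power2_eq_square minus_mult_minus)
    then have "ee_frac q (int k * a * x^2) = ee_frac q (int k * a * x0^2)"
      by (intro ee_frac_cong[OF q_pos]) (auto intro: cong_mult)
    then show ?thesis by (simp add: word_act_T_power)
  qed
qed

lemma T_power_q_id: "word_act (weil q a) (replicate q GenT) f = f"
proof -
  have "ee_frac q (int q * a * x^2) = 1" for x using ee_frac_multiple[OF q_pos, of "a * x^2"] by (simp add: mult.assoc)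
  then show ?thesis by (simp add: word_act_T_power)
qed

lemma dilate_W1eps:
  assumes d: "coprime d (int q)" and f: "f \<in> W1eps p \<alpha> \<epsilon>"
  shows "(\<lambda>y. f (d * y)) \<in> W1eps p \<alpha> \<epsilon>"
proof -
  have fp: "periodic q f" "parity f" using f W1eps_periodic W1eps_parity by auto
  have P: "periodic q (\<lambda>y. f (d * y))"
    unfolding periodic_def using periodic_cong[OF fp(1)] by (auto simp: cong_iff_dvd_diff algebra_simps)
  have Q: "parity (\<lambda>y. f (d * y))" using fp(2) by (simp add: parity_def)
  have R: "wip q (\<lambda>y. f (d * y)) (incl p \<alpha> y) = 0" if a2: "\<alpha> \<ge> 2" for y
  proof -
    let ?m = "int (p ^ (\<alpha> - 1))"
    have dm: "coprime d ?m"
    proof -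
      have "?m dvd int q" using q_split[OF a2] by simp
      then show ?thesis using d by (meson coprime_commute coprime_divisors dvd_refl)
    qed
    have inc: "incl p \<alpha> y x = incl p \<alpha> (d * y) (d * x)" for x
    proof -
      have "[d * x = int p * (d * y)] (mod ?m) \<longleftrightarrow> [d * x = d * (int p * y)] (mod ?m)" by (simp add: ac_simps)
      also have "\<dots> \<longleftrightarrow> [x = int p * y] (mod ?m)" using cong_mult_lcancel[OF dm] by blast
      finally show ?thesis by (simp add: incl_def)
    qed
    let ?F = "\<lambda>z. f z * cnj (incl p \<alpha> (d * y) z)"
    have Fp: "periodic q ?F"
    proof -
      have "incl p \<alpha> (d * y) (z + int q) = incl p \<alpha> (d * y) z" for z
      proof -
        have "?m dvd int q" using q_split[OF a2] by simp
        then have "[z + int q = z] (mod ?m)" by (simp add: cong_iff_dvd_diff)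
        then show ?thesis unfolding incl_def by (metis (full_types) cong_trans cong_sym)
      qed
      then show ?thesis using fp(1) by (simp add: periodic_def)
    qed
    have "wip q (\<lambda>y. f (d * y)) (incl p \<alpha> y) = (\<Sum>x\<in>{0..<int q}. ?F (d * x + 0))"
      unfolding wip_def using inc by simp
    also have "\<dots> = wip q f (incl p \<alpha> (d * y))" unfolding wip_def by (rule sum_periodic_affine[OF q_pos Fp d])
    also have "\<dots> = 0" using f a2 by (simp add: W1eps_iff)
    finally show ?thesis .
  qed
  show ?thesis using P Q R by (simp add: W1eps_iff)
qed

lemma square_class_dilation:
  assumes a': "coprime a' (int p)" and x: "[a * a' = x^2] (mod int p)"
  obtains c where "coprime c (int q)" "[a' = a * c^2] (mod int q)"
proof -
  have u: "\<not> int p dvd a * a'" using p_not_dvd_a a' coprime_p_iff p_dvd_mult_iff by blast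
  obtain z where z: "[a * a' = z^2] (mod int q)" using hensel_square[OF u x al] by blast
  obtain ai where ai: "[a * ai = 1] (mod int q)"
    using coprime_q_if_coprime_p[OF ca] coprime_iff_invertible_int q_pos by (metis of_nat_0_less_iff)
  have zu: "coprime z (int q)"
  proof -
    have "coprime (a * a') (int q)" using coprime_q_if_coprime_p ca a' by (simp add: coprime_mult_left_iff)
    then have "coprime (z^2) (int q)" using z by (metis cong_imp_coprime)
    then show ?thesis by simp
  qed
  have aiu: "coprime ai (int q)" using ai by (metis coprime_iff_invertible_int cong_sym coprime_commute
      cong_imp_coprime coprime_1_left coprime_mult_left_iff)
  have "[a * (z * ai)^2 = a * (a * a') * ai^2] (mod int q)"
  proof -
    have "[a * z^2 * ai^2 = a * (a * a') * ai^2] (mod int q)" using z by (intro cong_mult cong_refl) (simp add: cong_sym_eq)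
    then show ?thesis by (simp add: power_mult_distrib ac_simps)
  qed
  also have "a * (a * a') * ai^2 = a' * (a * ai)^2" by (simp add: power2_eq_square ac_simps)
  also have "[a' * (a * ai)^2 = a' * 1^2] (mod int q)" using ai by (intro cong_mult cong_refl cong_pow)
  finally have "[a' = a * (z * ai)^2] (mod int q)" by (simp add: cong_sym_eq)
  moreover have "coprime (z * ai) (int q)" using zu aiu by simp
  ultimately show ?thesis using that by blast
qed

end

lemma iso_mod_dilation:
  assumes A: "W1_setting p a \<alpha> \<epsilon>" and c: "coprime c (int (p ^ \<alpha>))"
    and ac: "[a' = a * c^2] (mod int (p ^ \<alpha>))"
  shows "iso_mod (weil (p ^ \<alpha>) a) (W1eps p \<alpha> \<epsilon>) (weil (p ^ \<alpha>) a') (W1eps p \<alpha> \<epsilon>)"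
proof -
  interpret A: W1_setting p a \<alpha> \<epsilon> by (rule A)
  obtain ci where ci: "[c * ci = 1] (mod int A.q)"
    using c coprime_iff_invertible_int A.q_pos by (metis of_nat_0_less_iff)
  have ciu: "coprime ci (int A.q)" using ci by (metis coprime_iff_invertible_int cong_sym coprime_commute
      cong_imp_coprime coprime_1_left coprime_mult_left_iff)
  let ?\<phi> = "\<lambda>f. (\<lambda>y. f (c * y))"
  let ?\<psi> = "\<lambda>f. (\<lambda>y. f (ci * y))"
  have bij: "bij_betw ?\<phi> (W1eps p \<alpha> \<epsilon>) (W1eps p \<alpha> \<epsilon>)"
  proof (rule bij_betwI[where g = ?\<psi>])
    show "?\<phi> \<in> W1eps p \<alpha> \<epsilon> \<rightarrow> W1eps p \<alpha> \<epsilon>" using A.dilate_W1eps[OF c] by blast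
    show "?\<psi> \<in> W1eps p \<alpha> \<epsilon> \<rightarrow> W1eps p \<alpha> \<epsilon>" using A.dilate_W1eps[OF ciu] by blast
    show "?\<psi> (?\<phi> f) = f" if "f \<in> W1eps p \<alpha> \<epsilon>" for f
    proof
      fix y
      have "[c * (ci * y) = 1 * y] (mod int A.q)" using ci by (metis cong_scalar_right mult.assoc)
      then show "?\<psi> (?\<phi> f) y = f y" using periodic_cong[OF A.W1eps_periodic[OF that]] by simp
    qed
    show "?\<phi> (?\<psi> f) = f" if "f \<in> W1eps p \<alpha> \<epsilon>" for f
    proof
      fix y
      have "[ci * (c * y) = 1 * y] (mod int A.q)" using ci by (metis cong_scalar_right mult.assoc mult.commute)
      then show "?\<phi> (?\<psi> f) y = f y" using periodic_cong[OF A.W1eps_periodic[OF that]] by simp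
    qed
  qed
  show ?thesis unfolding iso_mod_def
  proof (intro exI[of _ ?\<phi>] conjI bij ballI allI)
    fix w f assume "f \<in> W1eps p \<alpha> \<epsilon>"
    then show "?\<phi> (word_act (weil A.q a) w f) = word_act (weil A.q a') w (?\<phi> f)"
      using dilate_word_act[OF A.q_pos c ac A.W1eps_periodic] by blast
  qed auto
qed

lemma iso_mod_if_square_class:
  assumes A: "W1_setting p a \<alpha> \<epsilon>" and a': "coprime a' (int p)" and x: "[a * a' = x^2] (mod int p)"
  shows "iso_mod (weil (p ^ \<alpha>) a) (W1eps p \<alpha> \<epsilon>) (weil (p ^ \<alpha>) a') (W1eps p \<alpha> \<epsilon>)"
proof -
  obtain c where "coprime c (int (p ^ \<alpha>))" "[a' = a * c^2] (mod int (p ^ \<alpha>))"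
    using W1_setting.square_class_dilation[OF A a' x] by blast
  then show ?thesis using iso_mod_dilation[OF A] by blast
qed

locale W1_iso = A: W1_setting p a \<alpha> \<epsilon> + B: W1_setting p a' \<alpha>' \<epsilon>'
  for p a \<alpha> \<epsilon> a' \<alpha>' \<epsilon>' +
  fixes \<phi> :: "(int \<Rightarrow> complex) \<Rightarrow> (int \<Rightarrow> complex)"
  assumes bij: "bij_betw \<phi> (W1eps p \<alpha> \<epsilon>) (W1eps p \<alpha>' \<epsilon>')"
    and smult: "f \<in> W1eps p \<alpha> \<epsilon> \<Longrightarrow> \<phi> (\<lambda>x. c * f x) = (\<lambda>x. c * \<phi> f x)"
    and equivariant: "f \<in> W1eps p \<alpha> \<epsilon> \<Longrightarrow>
      \<phi> (word_act (weil (p ^ \<alpha>) a) w f) = word_act (weil (p ^ \<alpha>') a') w (\<phi> f)"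
begin

lemma pair_vec_1_W1eps: "A.pair_vec 1 \<in> W1eps p \<alpha> \<epsilon>"
  using A.pair_vec_W1eps[OF A.p_not_dvd_1] .

lemma image_pair_vec_1_W1eps: "\<phi> (A.pair_vec 1) \<in> W1eps p \<alpha>' \<epsilon>'"
  using bij pair_vec_1_W1eps by (auto simp: bij_betw_def)

lemma image_pair_vec_1_nonzero: obtains x0 where "\<phi> (A.pair_vec 1) x0 \<noteq> 0"
proof -
  have zero: "(\<lambda>_. 0) \<in> W1eps p \<alpha> \<epsilon>" by (simp add: A.W1eps_iff A.parity_def periodic_def wip_def)
  have "\<phi> (\<lambda>_. 0) = (\<lambda>_. 0)" using smult[OF pair_vec_1_W1eps, of 0] by simp
  then have "\<phi> (A.pair_vec 1) \<noteq> (\<lambda>_. 0)"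
    using bij pair_vec_1_W1eps zero A.pair_vec_nonzero[OF A.p_not_dvd_1]
    by (auto simp: bij_betw_def inj_on_def)
  then show ?thesis using that by auto
qed

text \<open>T^N is the scalar e(N a / q) on A.pair_vec 1 and the identity when q divides N.\<close>

lemma level_dvd: "int A.q dvd int B.q"
proof -
  obtain x0 where x0: "\<phi> (A.pair_vec 1) x0 \<noteq> 0" by (rule image_pair_vec_1_nonzero)
  have "\<phi> (word_act (weil A.q a) (replicate B.q GenT) (A.pair_vec 1))
      = word_act (weil B.q a') (replicate B.q GenT) (\<phi> (A.pair_vec 1))"
    using equivariant[OF pair_vec_1_W1eps] .
  then have "(\<lambda>x. ee_frac A.q (int B.q * a) * \<phi> (A.pair_vec 1) x) = \<phi> (A.pair_vec 1)"
    using A.T_power_pair_vec B.T_power_q_id smult[OF pair_vec_1_W1eps] by simp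
  then have "ee_frac A.q (int B.q * a) = 1" using x0 by (metis mult_cancel_right2)
  then have "int A.q dvd int B.q * a" using ee_frac_eq_1_iff[OF A.q_pos] by blast
  then show ?thesis using coprime_dvd_mult_cancel A.coprime_q_if_coprime_p A.ca by (metis mult.commute)
qed

lemma level_dvd': "int B.q dvd int A.q"
proof -
  have "B.pair_vec 1 \<in> \<phi> ` W1eps p \<alpha> \<epsilon>"
    using bij B.pair_vec_W1eps[OF A.p_not_dvd_1] by (simp add: bij_betw_def)
  then obtain f where f: "f \<in> W1eps p \<alpha> \<epsilon>" "\<phi> f = B.pair_vec 1" by (metis imageE)
  have "\<phi> (word_act (weil A.q a) (replicate A.q GenT) f) = word_act (weil B.q a') (replicate A.q GenT) (B.pair_vec 1)"
    using equivariant[OF f(1)] f(2) by simp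
  then have "B.pair_vec 1 = (\<lambda>x. ee_frac B.q (int A.q * a' * 1^2) * B.pair_vec 1 x)"
    using A.T_power_q_id f(2) B.T_power_pair_vec by simp
  then have "B.pair_vec 1 1 = ee_frac B.q (int A.q * a') * B.pair_vec 1 1" by (metis power_one mult_1_right)
  then have "ee_frac B.q (int A.q * a') = 1" using B.pair_vec_self[OF A.p_not_dvd_1] by simp
  then have "int B.q dvd int A.q * a'" using ee_frac_eq_1_iff[OF B.q_pos] by blast
  then show ?thesis using coprime_dvd_mult_cancel B.coprime_q_if_coprime_p B.ca by (metis mult.commute)
qed

lemma level_eq: "A.q = B.q"
  using level_dvd level_dvd' by (simp add: dvd_antisym)

text \<open>Comparing the T-eigenvalues at a point x0 where the image of A.pair_vec 1 is nonzero.\<close>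

lemma a_cong_square:
  assumes x0: "\<phi> (A.pair_vec 1) x0 \<noteq> 0"
  shows "[a = a' * x0^2] (mod int A.q)"
proof -
  have "\<phi> (word_act (weil A.q a) [GenT] (A.pair_vec 1)) = word_act (weil B.q a') [GenT] (\<phi> (A.pair_vec 1))"
    using equivariant[OF pair_vec_1_W1eps] .
  then have "\<phi> (\<lambda>x. ee_frac A.q (int 1 * a * 1^2) * A.pair_vec 1 x) = weil B.q a' GenT (\<phi> (A.pair_vec 1))"
    using A.T_power_pair_vec[of 1 1] by simp
  then have "(\<lambda>x. ee_frac A.q a * \<phi> (A.pair_vec 1) x) = (\<lambda>x. ee_frac B.q (a' * x^2) * \<phi> (A.pair_vec 1) x)"
    using smult[OF pair_vec_1_W1eps] by (simp add: weil_T)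
  then have "ee_frac A.q a = ee_frac A.q (a' * x0^2)" using x0 level_eq by (metis mult_cancel_right)
  then show ?thesis using ee_frac_eq_iff[OF A.q_pos] by blast
qed

lemma square_class_product: "\<exists>x. [a * a' = x ^ 2] (mod int p)"
proof -
  obtain x0 where "\<phi> (A.pair_vec 1) x0 \<noteq> 0" by (rule image_pair_vec_1_nonzero)
  then have "[a * a' = (a' * x0)^2] (mod int A.q)"
    using a_cong_square by (metis cong_scalar_right power2_eq_square mult.assoc mult.commute power_mult_distrib)
  then show ?thesis using A.p_dvd_q cong_dvd_modulus by blast
qed

text \<open>S^2 acts on W1eps by the scalar sigma^2 epsilon, and sigma only depends on the square class of a.\<close>

lemma eps_eq: "\<epsilon> = \<epsilon>'"
proof -
  obtain x0 where x0: "\<phi> (A.pair_vec 1) x0 \<noteq> 0" by (rule image_pair_vec_1_nonzero)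
  have cg: "[a = a' * x0^2] (mod int A.q)" using a_cong_square[OF x0] .
  have "\<not> int p dvd x0"
  proof
    assume "int p dvd x0"
    then have "int p dvd a' * x0^2" by (simp add: power2_eq_square)
    moreover have "[a = a' * x0^2] (mod int p)" using cg A.p_dvd_q cong_dvd_modulus by blast
    ultimately show False using A.p_not_dvd_a cong_dvd_iff by blast
  qed
  then have sg: "sigma A.q a = sigma A.q a'"
    using sigma_square_unit[OF A.q_pos A.coprime_q_if_not_dvd cg] by blast
  have "\<phi> (word_act (weil A.q a) [GenS, GenS] (A.pair_vec 1)) = word_act (weil B.q a') [GenS, GenS] (\<phi> (A.pair_vec 1))"
    using equivariant[OF pair_vec_1_W1eps] .
  moreover have "word_act (weil A.q a) [GenS, GenS] (A.pair_vec 1) = (\<lambda>z. sigma A.q a ^ 2 * of_int \<epsilon> * A.pair_vec 1 z)"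
    using A.weil_S_S_parity[OF A.pair_vec_periodic A.pair_vec_parity] by simp
  moreover have "word_act (weil B.q a') [GenS, GenS] (\<phi> (A.pair_vec 1))
      = (\<lambda>z. sigma B.q a' ^ 2 * of_int \<epsilon>' * \<phi> (A.pair_vec 1) z)"
    using B.weil_S_S_parity B.W1eps_periodic[OF image_pair_vec_1_W1eps] B.W1eps_parity[OF image_pair_vec_1_W1eps]
    by simp
  ultimately have "(\<lambda>z. sigma A.q a ^ 2 * of_int \<epsilon> * \<phi> (A.pair_vec 1) z)
      = (\<lambda>z. sigma B.q a' ^ 2 * of_int \<epsilon>' * \<phi> (A.pair_vec 1) z)"
    using smult[OF pair_vec_1_W1eps] by simp
  then have "sigma A.q a ^ 2 * of_int \<epsilon> = sigma A.q a ^ 2 * of_int \<epsilon>'"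
    using x0 level_eq sg by (metis mult_cancel_right)
  then show ?thesis using sigma_nonzero[OF A.q_pos A.coprime_2a_q] by simp
qed

end

lemma iso_mod_invariants:
  assumes A: "W1_setting p a \<alpha> \<epsilon>" and B: "W1_setting p a' \<alpha>' \<epsilon>'"
    and iso: "iso_mod (weil (p ^ \<alpha>) a) (W1eps p \<alpha> \<epsilon>) (weil (p ^ \<alpha>') a') (W1eps p \<alpha>' \<epsilon>')"
  shows "p ^ \<alpha> = p ^ \<alpha>' \<and> \<epsilon> = \<epsilon>' \<and> (\<exists>x. [a * a' = x ^ 2] (mod int p))"
proof -
  obtain \<phi> where "W1_iso p a \<alpha> \<epsilon> a' \<alpha>' \<epsilon>' \<phi>"
    using iso A B unfolding iso_mod_def W1_iso_def W1_iso_axioms_def by blast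
  then interpret W1_iso p a \<alpha> \<epsilon> a' \<alpha>' \<epsilon>' \<phi> .
  show ?thesis using level_eq eps_eq square_class_product by blast
qed

context odd_prime begin

definition QR :: "int \<Rightarrow> bool" where "QR c \<longleftrightarrow> (\<exists>s. [c = s^2] (mod int p))"

lemma gauss_sum_QR: assumes "\<not> int p dvd c" "QR c" shows "gauss_sum p c = gauss_sum p 1"
proof -
  obtain s where s: "[c = s^2] (mod int p)" using assms(2) by (auto simp: QR_def)
  have "\<not> int p dvd s"
  proof
    assume "int p dvd s" then have "int p dvd s^2" by (simp add: power2_eq_square)
    then show False using s assms(1) cong_dvd_iff by blast
  qed
  then have "coprime s (int p)" using coprime_p_iff by blast
  then have "gauss_sum p (1 * s^2) = gauss_sum p 1" by (rule gauss_sum_square_unit[OF p_pos])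
  moreover have "gauss_sum p c = gauss_sum p (1 * s^2)" using gauss_sum_cong[OF p_pos s] by simp
  ultimately show ?thesis by simp
qed

lemma Legendre_QR: "\<not> int p dvd x \<Longrightarrow> Legendre x (int p) = (if QR x then 1 else -1)"
proof -
  assume "\<not> int p dvd x"
  then have "\<not> [x = 0] (mod int p)" by (simp add: cong_0_iff)
  moreover have "QuadRes (int p) x \<longleftrightarrow> QR x" by (auto simp: QuadRes_def QR_def cong_sym_eq)
  ultimately show ?thesis by (simp add: Legendre_def)
qed

lemma not_cong_minus_1_1: "\<not> [-1 = 1] (mod int p)"
proof
  assume "[-1 = 1] (mod int p)"
  then have "int p dvd 2" by (simp add: cong_iff_dvd_diff)
  then show False using p_not_dvd_2 by blast
qed

lemma QR_mult_nonresidues: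
  assumes x: "\<not> int p dvd x" "\<not> QR x" and y: "\<not> int p dvd y" "\<not> QR y"
  shows "QR (x * y)"
proof -
  let ?k = "(p - 1) div 2"
  have ex: "[-1 = x ^ ?k] (mod int p)" using euler_criterion[OF p p_gt2, of x] Legendre_QR[OF x(1)] x(2) by simp
  have ey: "[-1 = y ^ ?k] (mod int p)" using euler_criterion[OF p p_gt2, of y] Legendre_QR[OF y(1)] y(2) by simp
  have "[(-1) * (-1) = x ^ ?k * y ^ ?k] (mod int p)" using ex ey by (rule cong_mult)
  then have e1: "[1 = (x * y) ^ ?k] (mod int p)" by (simp add: power_mult_distrib)
  have xy: "\<not> int p dvd x * y" using x y p_dvd_mult_iff by blast
  have "[Legendre (x * y) (int p) = (x * y) ^ ?k] (mod int p)" using euler_criterion[OF p p_gt2] .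
  then have "[Legendre (x * y) (int p) = 1] (mod int p)" using e1 by (metis cong_sym cong_trans)
  then show ?thesis using Legendre_QR[OF xy] not_cong_minus_1_1 by (auto split: if_splits)
qed

lemma not_QR_mult:
  assumes x: "\<not> int p dvd x" "QR x" and n: "\<not> int p dvd n" "\<not> QR n"
  shows "\<not> QR (n * x)"
proof
  assume "QR (n * x)"
  then obtain s where s: "[n * x = s^2] (mod int p)" by (auto simp: QR_def)
  obtain t where t: "[x = t^2] (mod int p)" using x(2) by (auto simp: QR_def)
  have "\<not> int p dvd t"
  proof
    assume "int p dvd t" then have "int p dvd t^2" by (simp add: power2_eq_square)
    then show False using t x(1) cong_dvd_iff by blast
  qed
  then obtain ti where ti: "[t * ti = 1] (mod int p)" using inverse_mod_p_exists by blast
  have "[n * x * ti^2 = s^2 * ti^2] (mod int p)" using s by (intro cong_mult cong_refl)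
  moreover have "[n * x * ti^2 = n * (t * ti)^2] (mod int p)"
  proof -
    have "[n * x * ti^2 = n * t^2 * ti^2] (mod int p)" using t by (intro cong_mult cong_refl)
    then show ?thesis by (simp add: power_mult_distrib ac_simps)
  qed
  moreover have "[n * (t * ti)^2 = n * 1^2] (mod int p)" using ti by (intro cong_mult cong_refl cong_pow)
  ultimately have "[n = (s * ti)^2] (mod int p)"
    by (simp add: power_mult_distrib) (meson cong_sym cong_trans)
  then show False using n(2) by (auto simp: QR_def)
qed

lemma gauss_sum_nonresidues_eq: assumes c: "\<not> int p dvd c" "\<not> QR c" and n: "\<not> int p dvd n" "\<not> QR n"
  shows "gauss_sum p c = gauss_sum p n"
proof -
  obtain ni where ni: "[n * ni = 1] (mod int p)" using inverse_mod_p_exists[OF n(1)] by blast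
  have "QR (c * n)" using QR_mult_nonresidues[OF c n] .
  then obtain s where s: "[c * n = s^2] (mod int p)" by (auto simp: QR_def)
  have niu: "\<not> int p dvd ni" using not_dvd_if_inverse[OF ni] .
  have "\<not> int p dvd s"
  proof
    assume "int p dvd s" then have "int p dvd s^2" by (simp add: power2_eq_square)
    then have "int p dvd c * n" using s cong_dvd_iff by blast
    then show False using c(1) n(1) p_dvd_mult_iff by blast
  qed
  then have su: "coprime (s * ni) (int p)" using niu coprime_p_iff p_dvd_mult_iff by blast
  have "[c = n * (s * ni)^2] (mod int p)"
  proof -
    have "[n * (s * ni)^2 = (c * n) * ni^2 * n] (mod int p)"
    proof -
      have "[s^2 * ni^2 * n = (c * n) * ni^2 * n] (mod int p)" using s by (intro cong_mult cong_refl) (simp add: cong_sym_eq)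
      then show ?thesis by (simp add: power_mult_distrib ac_simps)
    qed
    also have "(c * n) * ni^2 * n = c * (n * ni)^2" by (simp add: power2_eq_square ac_simps)
    also have "[c * (n * ni)^2 = c * 1^2] (mod int p)" using ni by (intro cong_mult cong_refl cong_pow)
    finally show ?thesis by (simp add: cong_sym_eq)
  qed
  then have "gauss_sum p c = gauss_sum p (n * (s * ni)^2)" using gauss_sum_cong[OF p_pos] by blast
  also have "\<dots> = gauss_sum p n" by (rule gauss_sum_square_unit[OF p_pos su])
  finally show ?thesis .
qed

lemma gauss_sum_0: "gauss_sum p 0 = of_nat p" by (simp add: gauss_sum_def)

lemma sum_gauss_sum: "(\<Sum>c\<in>{0..<int p}. gauss_sum p c) = of_nat p"
proof -
  have "(\<Sum>c\<in>{0..<int p}. gauss_sum p c) = (\<Sum>x\<in>{0..<int p}. \<Sum>c\<in>{0..<int p}. ee_frac p (c * x^2))"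
    unfolding gauss_sum_def by (rule sum.swap)
  also have "\<dots> = (\<Sum>x\<in>{0..<int p}. if int p dvd (0 + x) then of_nat p else 0)"
  proof (intro sum.cong refl)
    fix x
    have "int p dvd x^2 \<longleftrightarrow> int p dvd x" using p_dvd_mult_iff by (simp add: power2_eq_square)
    then show "(\<Sum>c\<in>{0..<int p}. ee_frac p (c * x^2)) = (if int p dvd (0 + x) then of_nat p else 0)"
      using sum_ee_frac_geometric[OF p_pos, of "x^2"] by simp
  qed
  also have "\<dots> = of_nat p" using sum_delta_mod[OF p_pos, of 0 "\<lambda>_. of_nat p"] by simp
  finally show ?thesis .
qed

lemma periodic_gauss_sum: "periodic p (gauss_sum p)"
  unfolding periodic_def by (intro allI gauss_sum_cong[OF p_pos]) (simp add: cong_iff_mod_eq)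

lemma gauss_sum_nonresidue: assumes n: "\<not> int p dvd n" "\<not> QR n" shows "gauss_sum p n = - gauss_sum p 1"
proof -
  have nu: "coprime n (int p)" using n coprime_p_iff by blast
  have "(\<Sum>c\<in>{0..<int p}. gauss_sum p (n * c + 0)) = (\<Sum>c\<in>{0..<int p}. gauss_sum p c)"
    by (rule sum_periodic_affine[OF p_pos periodic_gauss_sum nu])
  then have "(\<Sum>c\<in>{0..<int p}. gauss_sum p c + gauss_sum p (n * c)) = 2 * of_nat p"
    using sum_gauss_sum by (simp add: sum.distrib)
  moreover have "(\<Sum>c\<in>{0..<int p}. gauss_sum p c + gauss_sum p (n * c)) = 2 * of_nat p + of_nat (p - 1) * (gauss_sum p 1 + gauss_sum p n)"
  proof -
    have split: "{0..<int p} = insert 0 {1..<int p}" using p_pos by auto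
    have "(\<Sum>c\<in>{1..<int p}. gauss_sum p c + gauss_sum p (n * c)) = (\<Sum>c\<in>{1..<int p}. gauss_sum p 1 + gauss_sum p n)"
    proof (intro sum.cong refl)
      fix c assume "c \<in> {1..<int p}"
      then have cu: "\<not> int p dvd c" by (auto simp: zdvd_not_zless)
      have ncu: "\<not> int p dvd n * c" using cu n(1) p_dvd_mult_iff by blast
      show "gauss_sum p c + gauss_sum p (n * c) = gauss_sum p 1 + gauss_sum p n"
      proof (cases "QR c")
        case True
        then show ?thesis using gauss_sum_QR[OF cu True] gauss_sum_nonresidues_eq[OF ncu not_QR_mult[OF cu True n] n] by simp
      next
        case False
        have "QR (n * c)" using QR_mult_nonresidues[OF n cu False] .
        then show ?thesis using gauss_sum_QR[OF ncu] gauss_sum_nonresidues_eq[OF cu False n] by simp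
      qed
    qed
    also have "\<dots> = of_nat (p - 1) * (gauss_sum p 1 + gauss_sum p n)"
      using p_pos by (simp add: of_nat_diff)
    finally show ?thesis using split gauss_sum_0 by simp
  qed
  ultimately have "of_nat (p - 1) * (gauss_sum p 1 + gauss_sum p n) = 0" by simp
  then show ?thesis using p_gt2 by (simp add: add_eq_0_iff)
qed

lemma gauss_sum_mult: assumes x: "\<not> int p dvd x" and y: "\<not> int p dvd y"
  shows "gauss_sum p x * gauss_sum p y = gauss_sum p 1 * gauss_sum p (x * y)"
proof (cases "QR x")
  case True
  have "QR (y * x) \<or> \<not> QR (y * x)" by blast
  obtain s where s: "[x = s^2] (mod int p)" using True by (auto simp: QR_def)
  have "\<not> int p dvd s"
  proof
    assume "int p dvd s" then have "int p dvd s^2" by (simp add: power2_eq_square)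
    then show False using s x cong_dvd_iff by blast
  qed
  then have su: "coprime s (int p)" using coprime_p_iff by blast
  have "gauss_sum p (x * y) = gauss_sum p (y * s^2)" using gauss_sum_cong[OF p_pos] s by (metis cong_scalar_left mult.commute)
  also have "\<dots> = gauss_sum p y" by (rule gauss_sum_square_unit[OF p_pos su])
  finally show ?thesis using gauss_sum_QR[OF x True] by simp
next
  case xn: False
  show ?thesis
  proof (cases "QR y")
    case True
    obtain s where s: "[y = s^2] (mod int p)" using True by (auto simp: QR_def)
    have "\<not> int p dvd s"
    proof
      assume "int p dvd s" then have "int p dvd s^2" by (simp add: power2_eq_square)
      then show False using s y cong_dvd_iff by blast
    qed
    then have su: "coprime s (int p)" using coprime_p_iff by blast
    have "gauss_sum p (x * y) = gauss_sum p (x * s^2)" using gauss_sum_cong[OF p_pos] s by (metis cong_scalar_left)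
    also have "\<dots> = gauss_sum p x" by (rule gauss_sum_square_unit[OF p_pos su])
    finally show ?thesis using gauss_sum_QR[OF y True] by simp
  next
    case yn: False
    have xy: "\<not> int p dvd x * y" using x y p_dvd_mult_iff by blast
    show ?thesis using gauss_sum_nonresidue[OF x xn] gauss_sum_nonresidue[OF y yn] gauss_sum_QR[OF xy QR_mult_nonresidues[OF x xn y yn]] by simp
  qed
qed

lemma gauss_sum_cnj: "cnj (gauss_sum p c) = gauss_sum p (- c)"
  by (simp add: gauss_sum_def cnj_sum ee_frac_cnj)

lemma gauss_sum_1_minus_1: "gauss_sum p 1 * gauss_sum p (-1) = of_nat p"
proof -
  have "coprime (2 * 1) (int p)" using coprime_p_iff p_not_dvd_2 by simp
  then show ?thesis using gauss_sum_times_cnj[OF p_pos, of 1] gauss_sum_cnj[of 1] by simp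
qed

end

lemma sum_swap_factor:
  fixes c :: "'a :: comm_semiring_0"
  shows "(\<Sum>y\<in>Y. A y * (c * (\<Sum>x\<in>X. B x y * f x))) = c * (\<Sum>x\<in>X. f x * (\<Sum>y\<in>Y. A y * B x y))"
proof -
  have "(\<Sum>y\<in>Y. A y * (c * (\<Sum>x\<in>X. B x y * f x))) = c * (\<Sum>y\<in>Y. \<Sum>x\<in>X. A y * B x y * f x)"
    by (simp add: sum_distrib_left ac_simps)
  also have "(\<Sum>y\<in>Y. \<Sum>x\<in>X. A y * B x y * f x) = (\<Sum>x\<in>X. \<Sum>y\<in>Y. A y * B x y * f x)" by (rule sum.swap)
  also have "\<dots> = (\<Sum>x\<in>X. f x * (\<Sum>y\<in>Y. A y * B x y))"
  proof (intro sum.cong refl)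
    fix x show "(\<Sum>y\<in>Y. A y * B x y * f x) = f x * (\<Sum>y\<in>Y. A y * B x y)"
      by (simp only: sum_distrib_left mult.commute[of "f x"])
  qed
  finally show ?thesis .
qed

context odd_prime_unit begin

definition ngs :: "int \<Rightarrow> complex" where "ngs c = gauss_sum p c / sqrtc p"

definition inv_p :: "int \<Rightarrow> int" where "inv_p x = (SOME y. [x * y = 1] (mod int p))"

lemma inv_p_cong: "\<not> int p dvd x \<Longrightarrow> [x * inv_p x = 1] (mod int p)"
  unfolding inv_p_def using inverse_mod_p_exists by (rule someI_ex)

lemma inv_p_eq: assumes "\<not> int p dvd x" obtains k where "x * inv_p x = 1 + int p * k"
proof -
  have "int p dvd x * inv_p x - 1" using inv_p_cong[OF assms] by (simp add: cong_iff_dvd_diff)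
  then obtain k where "x * inv_p x - 1 = int p * k" by blast
  then have "x * inv_p x = 1 + int p * k" by (simp add: algebra_simps)
  then show ?thesis by (rule that)
qed

lemma not_dvd_inv_p: "\<not> int p dvd x \<Longrightarrow> \<not> int p dvd inv_p x" using inv_p_cong not_dvd_if_inverse by blast

lemma ngs_cong: "[c = c'] (mod int p) \<Longrightarrow> ngs c = ngs c'"
  using gauss_sum_cong[OF p_pos] by (simp add: ngs_def)

lemma ngs_square_unit: "\<not> int p dvd x \<Longrightarrow> ngs (c * x^2) = ngs c"
  using gauss_sum_square_unit[OF p_pos] coprime_p_iff by (simp add: ngs_def)

lemma ngs_nonzero: "\<not> int p dvd c \<Longrightarrow> ngs c \<noteq> 0"
proof -
  assume "\<not> int p dvd c"
  then have "coprime (2 * c) (int p)" using coprime_p_iff p_not_dvd_2 p_dvd_mult_iff by simp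
  then show ?thesis using gauss_sum_nonzero[OF p_pos] sqrtc_nonzero[OF p_pos] by (simp add: ngs_def)
qed

lemma ngs_mult: "\<not> int p dvd x \<Longrightarrow> \<not> int p dvd y \<Longrightarrow> ngs x * ngs y = ngs 1 * ngs (x * y)"
  using gauss_sum_mult by (simp add: ngs_def)

lemma ngs_1_minus_1: "ngs 1 * ngs (-1) = 1"
proof -
  have "ngs 1 * ngs (-1) = gauss_sum p 1 * gauss_sum p (-1) / (sqrtc p * sqrtc p)" by (simp add: ngs_def)
  also have "\<dots> = 1" using gauss_sum_1_minus_1 sqrtc_square p_pos by simp
  finally show ?thesis .
qed

lemma sigma_ngs: "sigma p a = ngs (- a)" by (simp add: sigma_gauss_sum ngs_def)

lemma ngs_cocycle_dvd_al: assumes g: "\<not> int p dvd g" shows "ngs (- a) ^ 2 * ngs (- a * g) = ngs (a * g)"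
proof -
  have ma: "\<not> int p dvd (- a)" using p_not_dvd_a by simp
  have m1: "\<not> int p dvd (-1)" using p_gt2 by simp
  have ag: "\<not> int p dvd a * g" using p_not_dvd_a g p_dvd_mult_iff by blast
  have "ngs (- a) * ngs (- a) = ngs 1 * ngs (1 * a^2)" using ngs_mult[OF ma ma] by (simp add: power2_eq_square)
  also have "ngs (1 * a^2) = ngs 1" using ngs_square_unit[OF p_not_dvd_a] .
  finally have 1: "ngs (- a) ^ 2 = ngs 1 * ngs 1" by (simp add: power2_eq_square)
  have 2: "ngs (-1) * ngs (a * g) = ngs 1 * ngs (- a * g)" using ngs_mult[OF m1 ag] by simp
  have "ngs (- a) ^ 2 * ngs (- a * g) = ngs 1 * (ngs 1 * ngs (- a * g))" using 1 by simp
  also have "\<dots> = ngs 1 * ngs (-1) * ngs (a * g)" using 2 by simp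
  also have "\<dots> = ngs (a * g)" using ngs_1_minus_1 by simp
  finally show ?thesis .
qed

lemma ngs_cocycle_units: assumes g: "\<not> int p dvd g" and al: "\<not> int p dvd al" and gi: "[g * gi = 1] (mod int p)"
  shows "ngs (- a) * ngs (- a * g) * ngs (a * gi * al) = ngs (- a * al)"
proof -
  have ma: "\<not> int p dvd (- a)" using p_not_dvd_a by simp
  have m1: "\<not> int p dvd (-1)" using p_gt2 by simp
  have mag: "\<not> int p dvd (- a * g)" using p_not_dvd_a g p_dvd_mult_iff by simp
  have giu: "\<not> int p dvd gi" using not_dvd_if_inverse[OF gi] .
  have agial: "\<not> int p dvd (a * gi * al)" using p_not_dvd_a giu al p_dvd_mult_iff by simp
  have aal: "\<not> int p dvd (a * al)" using p_not_dvd_a al p_dvd_mult_iff by simp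
  have "ngs (- a) * ngs (- a * g) = ngs 1 * ngs (g * a^2)"
    using ngs_mult[OF ma mag] by (simp add: power2_eq_square ac_simps)
  also have "ngs (g * a^2) = ngs g" using ngs_square_unit[OF p_not_dvd_a] .
  finally have 1: "ngs (- a) * ngs (- a * g) = ngs 1 * ngs g" .
  have "ngs g * ngs (a * gi * al) = ngs 1 * ngs (g * (a * gi * al))" using ngs_mult[OF g agial] .
  also have "ngs (g * (a * gi * al)) = ngs (a * al)"
  proof (rule ngs_cong)
    have "[(g * gi) * (a * al) = 1 * (a * al)] (mod int p)" using gi by (rule cong_scalar_right)
    then show "[g * (a * gi * al) = a * al] (mod int p)" by (simp add: ac_simps)
  qed
  finally have 2: "ngs g * ngs (a * gi * al) = ngs 1 * ngs (a * al)" .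
  have 3: "ngs (-1) * ngs (a * al) = ngs 1 * ngs (- a * al)" using ngs_mult[OF m1 aal] by simp
  have 4: "ngs (-1) * ngs (-1) = ngs 1 * ngs 1" using ngs_mult[OF m1 m1] by simp
  have "ngs (- a) * ngs (- a * g) * ngs (a * gi * al) = ngs 1 * (ngs g * ngs (a * gi * al))" using 1 by (simp add: ac_simps)
  also have "\<dots> = (ngs 1 * ngs 1) * ngs (a * al)" using 2 by (simp add: ac_simps)
  also have "\<dots> = ngs (-1) * (ngs (-1) * ngs (a * al))" using 4 by (simp add: ac_simps)
  also have "\<dots> = (ngs 1 * ngs (-1)) * ngs (- a * al)" using 3 by (simp add: ac_simps)
  finally show ?thesis using ngs_1_minus_1 by simp
qed

text \<open>The action of ((al, b), (g, d)) on W(L_p(a)), read off from the Bruhat decomposition: a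
  dilation times a power of T if g = 0 mod p, a twisted Fourier transform otherwise.\<close>

definition mat_action :: "int \<Rightarrow> int \<Rightarrow> int \<Rightarrow> int \<Rightarrow> (int \<Rightarrow> complex) \<Rightarrow> (int \<Rightarrow> complex)" where
  "mat_action al b g d f = (\<lambda>y. if int p dvd g then ngs (- a * al) / ngs (- a) * ee_frac p (a * al * b * y^2) * f (al * y)
     else ngs (- a * g) / sqrtc p * (\<Sum>x\<in>{0..<int p}. ee_frac p (a * inv_p g * (al * y^2 - 2 * x * y + d * x^2)) * f x))"

lemma ngs_minus_a_nonzero: "ngs (- a) \<noteq> 0" using ngs_nonzero p_not_dvd_a by simp

lemma mat_action_T:
  assumes det: "al * d - b * g = 1" and f: "periodic p f"
  shows "weil p a GenT (mat_action al b g d f) = mat_action (al + g) (b + d) g d f"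
proof
  fix y
  show "weil p a GenT (mat_action al b g d f) y = mat_action (al + g) (b + d) g d f y"
  proof (cases "int p dvd g")
    case True
    then obtain k where k: "g = int p * k" by blast
    have 1: "ngs (- a * (al + g)) = ngs (- a * al)"
      by (rule ngs_cong) (simp add: cong_iff_dvd_diff k algebra_simps)
    have 2: "f ((al + g) * y) = f (al * y)"
      by (rule periodic_cong[OF f]) (simp add: cong_iff_dvd_diff k algebra_simps)
    have 3: "ee_frac p (a * (al + g) * (b + d) * y^2) = ee_frac p (a * y^2) * ee_frac p (a * al * b * y^2)"
    proof -
      have "ee_frac p (a * (al + g) * (b + d) * y^2) = ee_frac p (a * y^2 + a * al * b * y^2)"
        by (rule ee_frac_eq_if_dvd[OF p_pos]) (use det k in Groebner_Basis.algebra)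
      then show ?thesis by (simp add: ee_frac_add)
    qed
    show ?thesis using True 1 2 3 by (simp add: mat_action_def weil_T)
  next
    case False
    obtain k where k: "g * inv_p g = 1 + int p * k" using inv_p_eq[OF False] by blast
    have e: "ee_frac p (a * inv_p g * ((al + g) * y^2 - 2 * x * y + d * x^2)) = ee_frac p (a * y^2) * ee_frac p (a * inv_p g * (al * y^2 - 2 * x * y + d * x^2))" for x
    proof -
      have "ee_frac p (a * inv_p g * ((al + g) * y^2 - 2 * x * y + d * x^2)) = ee_frac p (a * y^2 + a * inv_p g * (al * y^2 - 2 * x * y + d * x^2))"
        by (rule ee_frac_eq_if_dvd[OF p_pos]) (use k in Groebner_Basis.algebra)
      then show ?thesis by (simp add: ee_frac_add)
    qed
    have s: "(\<Sum>x\<in>{0..<int p}. ee_frac p (a * inv_p g * ((al + g) * y^2 - 2 * x * y + d * x^2)) * f x)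
       = ee_frac p (a * y^2) * (\<Sum>x\<in>{0..<int p}. ee_frac p (a * inv_p g * (al * y^2 - 2 * x * y + d * x^2)) * f x)"
      unfolding e by (simp only: sum_distrib_left mult.assoc)
    show ?thesis using False unfolding mat_action_def weil_T by (simp only: s if_False) (simp add: ac_simps)
  qed
qed

lemma mat_action_S_dvd_g:
  assumes det: "al * d - b * g = 1" and f: "periodic p f" and g_pZ: "int p dvd g"
  shows "weil p a GenS (mat_action al b g d f) z = mat_action (- g) (- d) al b f z"
proof -
  have sg: "sigma p a = ngs (- a)" by (rule sigma_ngs)
  from g_pZ obtain k where k: "g = int p * k" by blast
  have alu: "\<not> int p dvd al"
  proof
    assume "int p dvd al"
    then have "int p dvd al * d - b * g" using g_pZ by simp
    then show False using det p_gt2 by simp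
  qed
  obtain k2 where k2: "al * inv_p al = 1 + int p * k2" using inv_p_eq[OF alu] by blast
  let ?ai = "inv_p al"
  have aiu: "coprime ?ai (int p)" using not_dvd_inv_p[OF alu] coprime_p_iff by blast
  let ?F = "\<lambda>y. ee_frac p (- (2 * a * z * y)) * ee_frac p (a * al * b * y^2) * f (al * y)"
  have Fp: "periodic p ?F"
  proof -
    have "f (al * (y + int p)) = f (al * y)" for y
      by (rule periodic_cong[OF f]) (simp add: cong_iff_dvd_diff algebra_simps)
    moreover have "ee_frac p (- (2 * a * z * (y + int p))) = ee_frac p (- (2 * a * z * y))" for y
      by (rule ee_frac_eq_if_dvd[OF p_pos]) (simp add: algebra_simps)
    moreover have "ee_frac p (a * al * b * (y + int p)^2) = ee_frac p (a * al * b * y^2)" for y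
      by (rule ee_frac_eq_if_dvd[OF p_pos]) Groebner_Basis.algebra
    ultimately show ?thesis by (simp add: periodic_def)
  qed
  have FF: "?F (?ai * x + 0) = ee_frac p (a * ?ai * (- g * z^2 - 2 * x * z + al * 0 + b * x^2)) * f x" for x
  proof -
    have "f (al * (?ai * x + 0)) = f x"
      by (rule periodic_cong[OF f]) (use k2 in \<open>simp add: cong_iff_dvd_diff, Groebner_Basis.algebra\<close>)
    moreover have "ee_frac p (- (2 * a * z * (?ai * x + 0))) * ee_frac p (a * al * b * (?ai * x + 0)^2) = ee_frac p (a * ?ai * (- g * z^2 - 2 * x * z + al * 0 + b * x^2))"
    proof -
      have "ee_frac p (- (2 * a * z * (?ai * x + 0)) + a * al * b * (?ai * x + 0)^2) = ee_frac p (a * ?ai * (- g * z^2 - 2 * x * z + al * 0 + b * x^2))"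
        by (rule ee_frac_eq_if_dvd[OF p_pos]) (use k k2 in Groebner_Basis.algebra)
      then show ?thesis by (simp only: ee_frac_add)
    qed
    ultimately show ?thesis by simp
  qed
  have "weil p a GenS (mat_action al b g d f) z = ngs (- a) / sqrtc p * (\<Sum>y\<in>{0..<int p}. ee_frac p (- (2 * a * z * y)) * (ngs (- a * al) / ngs (- a) * ee_frac p (a * al * b * y^2) * f (al * y)))"
    using g_pZ by (simp add: weil_S mat_action_def sg)
  also have "\<dots> = ngs (- a * al) / sqrtc p * (\<Sum>y\<in>{0..<int p}. ?F y)"
    using ngs_minus_a_nonzero by (simp add: sum_distrib_left ac_simps)
  also have "(\<Sum>y\<in>{0..<int p}. ?F y) = (\<Sum>x\<in>{0..<int p}. ?F (?ai * x + 0))"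
    by (rule sum_periodic_affine[OF p_pos Fp aiu, symmetric])
  also have "\<dots> = (\<Sum>x\<in>{0..<int p}. ee_frac p (a * ?ai * (- g * z^2 - 2 * x * z + b * x^2)) * f x)"
    using FF by simp
  finally show ?thesis using alu by (simp add: mat_action_def ac_simps)
qed

lemma weil_S_mat_action_g_unit:
  assumes g_unit: "\<not> int p dvd g"
  shows "weil p a GenS (mat_action al b g d f) z = ngs (- a) * (ngs (- a * g) / sqrtc p) / sqrtc p *
    (\<Sum>x\<in>{0..<int p}. f x * (\<Sum>y\<in>{0..<int p}.
      ee_frac p (- (2 * a * z * y)) * ee_frac p (a * inv_p g * (al * y^2 - 2 * x * y + d * x^2))))"
proof -
  have "weil p a GenS (mat_action al b g d f) z = ngs (- a) / sqrtc p * (\<Sum>y\<in>{0..<int p}. ee_frac p (- (2 * a * z * y)) *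
      (ngs (- a * g) / sqrtc p * (\<Sum>x\<in>{0..<int p}. ee_frac p (a * inv_p g * (al * y^2 - 2 * x * y + d * x^2)) * f x)))"
    by (simp only: weil_S mat_action_def sigma_ngs g_unit if_False)
  also have "\<dots> = ngs (- a) / sqrtc p * (ngs (- a * g) / sqrtc p * (\<Sum>x\<in>{0..<int p}. f x * (\<Sum>y\<in>{0..<int p}. ee_frac p (- (2 * a * z * y)) * ee_frac p (a * inv_p g * (al * y^2 - 2 * x * y + d * x^2)))))"
    by (simp only: sum_swap_factor)
  finally show ?thesis by (simp only: ac_simps times_divide_eq_left times_divide_eq_right)
qed

lemma sum_S_mat_action_dvd_al:
  assumes g_unit: "\<not> int p dvd g" and al_pZ: "int p dvd al"
  shows "(\<Sum>y\<in>{0..<int p}. ee_frac p (- (2 * a * z * y)) * ee_frac p (a * inv_p g * (al * y^2 - 2 * x * y + d * x^2)))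
    = ee_frac p (a * inv_p g * d * x^2) * (if int p dvd g * z + x then of_nat p else 0)"
proof -
  obtain k1 where k1: "g * inv_p g = 1 + int p * k1" using inv_p_eq[OF g_unit] by blast
  from al_pZ obtain k3 where k3: "al - int p * k3 = 0" by (metis dvd_def diff_self)
  have "ee_frac p (- (2 * a * z * y)) * ee_frac p (a * inv_p g * (al * y^2 - 2 * x * y + d * x^2)) = ee_frac p (a * inv_p g * d * x^2) * ee_frac p (y * (- (2 * a) * (z + inv_p g * x)))" for y
  proof -
    have "ee_frac p (- (2 * a * z * y) + a * inv_p g * (al * y^2 - 2 * x * y + d * x^2)) = ee_frac p (a * inv_p g * d * x^2 + y * (- (2 * a) * (z + inv_p g * x)))"
      by (rule ee_frac_eq_if_dvd[OF p_pos]) (use k3 in Groebner_Basis.algebra)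
    then show ?thesis by (simp only: ee_frac_add)
  qed
  then have "(\<Sum>y\<in>{0..<int p}. ee_frac p (- (2 * a * z * y)) * ee_frac p (a * inv_p g * (al * y^2 - 2 * x * y + d * x^2)))
      = ee_frac p (a * inv_p g * d * x^2) * (\<Sum>y\<in>{0..<int p}. ee_frac p (y * (- (2 * a) * (z + inv_p g * x))))"
    by (simp add: sum_distrib_left)
  also have "(\<Sum>y\<in>{0..<int p}. ee_frac p (y * (- (2 * a) * (z + inv_p g * x)))) = (if int p dvd g * z + x then of_nat p else 0)"
  proof -
    have "int p dvd (- (2 * a) * (z + inv_p g * x)) \<longleftrightarrow> int p dvd z + inv_p g * x"
      using p_dvd_mult_iff p_not_dvd_2 p_not_dvd_a by simp
    also have "\<dots> \<longleftrightarrow> int p dvd g * z + x"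
    proof
      assume "int p dvd z + inv_p g * x"
      then have d1: "int p dvd g * (z + inv_p g * x)" by simp
      have d2: "int p dvd g * (z + inv_p g * x) - (g * z + x)" using k1 by Groebner_Basis.algebra
      show "int p dvd g * z + x" using dvd_diff[OF d1 d2] by simp
    next
      assume d1: "int p dvd g * z + x"
      have d2: "int p dvd g * (z + inv_p g * x) - (g * z + x)" using k1 by Groebner_Basis.algebra
      have "int p dvd (g * (z + inv_p g * x) - (g * z + x)) + (g * z + x)" using dvd_add[OF d2 d1] .
      then have "int p dvd g * (z + inv_p g * x)" by simp
      then show "int p dvd z + inv_p g * x" using g_unit p_dvd_mult_iff by blast
    qed
    finally have cnd: "int p dvd (- (2 * a) * (z + inv_p g * x)) \<longleftrightarrow> int p dvd g * z + x" .
    have "(\<Sum>y\<in>{0..<int p}. ee_frac p (y * (- (2 * a) * (z + inv_p g * x)))) = (if int p dvd (- (2 * a) * (z + inv_p g * x)) then of_nat p else 0)"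
      by (rule sum_ee_frac_geometric[OF p_pos])
    then show ?thesis by (simp only: cnd)
  qed
  finally show ?thesis .
qed

lemma mat_action_S_dvd_al:
  assumes det: "al * d - b * g = 1" and f: "periodic p f"
    and g_unit: "\<not> int p dvd g" and al_pZ: "int p dvd al"
  shows "weil p a GenS (mat_action al b g d f) z = mat_action (- g) (- d) al b f z"
proof -
  obtain k1 where k1: "g * inv_p g = 1 + int p * k1" using inv_p_eq[OF g_unit] by blast
  let ?gi = "inv_p g"
  note sumform = weil_S_mat_action_g_unit[OF g_unit, of al b d f z]
  note inner = sum_S_mat_action_dvd_al[OF g_unit al_pZ, of z]
  let ?H = "\<lambda>x. f x * ee_frac p (a * ?gi * d * x^2) * of_nat p"
  have Hp: "periodic p ?H"
  proof -
    have "ee_frac p (a * ?gi * d * (x + int p)^2) = ee_frac p (a * ?gi * d * x^2)" for x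
      by (rule ee_frac_eq_if_dvd[OF p_pos]) Groebner_Basis.algebra
    then show ?thesis using f by (simp add: periodic_def)
  qed
  have "(\<Sum>x\<in>{0..<int p}. f x * (ee_frac p (a * ?gi * d * x^2) * (if int p dvd g * z + x then of_nat p else 0)))
      = (\<Sum>x\<in>{0..<int p}. if int p dvd g * z + x then ?H x else 0)"
    by (intro sum.cong refl) (simp add: ac_simps)
  also have "\<dots> = ?H ((- (g * z)) mod int p)" by (rule sum_delta_mod[OF p_pos])
  also have "\<dots> = ?H (- (g * z))" by (rule periodic_mod[OF Hp])
  finally have S1: "weil p a GenS (mat_action al b g d f) z = ngs (- a) * (ngs (- a * g) / sqrtc p) / sqrtc p * ?H (- (g * z))"
    using sumform inner by simp
  have cst: "ngs (- a) * ngs (- a * g) = ngs (- a * - g) / ngs (- a)"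
    using ngs_cocycle_dvd_al[OF g_unit] ngs_minus_a_nonzero by (simp add: field_simps power2_eq_square)
  have ezz: "ee_frac p (a * ?gi * d * (- (g * z))^2) = ee_frac p (a * - g * - d * z^2)"
    by (rule ee_frac_eq_if_dvd[OF p_pos]) (use k1 in Groebner_Basis.algebra)
  have "weil p a GenS (mat_action al b g d f) z = ngs (- a) * ngs (- a * g) * f (- (g * z)) * ee_frac p (a * ?gi * d * (- (g * z))^2)"
    using S1 sqrtc_square p_pos by (simp add: field_simps)
  also have "\<dots> = ngs (- a * - g) / ngs (- a) * ee_frac p (a * - g * - d * z^2) * f (- g * z)"
    using cst ezz by simp
  finally show ?thesis using al_pZ by (simp add: mat_action_def)
qed

text \<open>Completing the square in y: shift y by inv_p al * (x + g z).\<close>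

lemma sum_S_mat_action_units:
  assumes det: "al * d - b * g = 1" and g_unit: "\<not> int p dvd g" and al_unit: "\<not> int p dvd al"
  shows "(\<Sum>y\<in>{0..<int p}. ee_frac p (- (2 * a * z * y)) * ee_frac p (a * inv_p g * (al * y^2 - 2 * x * y + d * x^2)))
    = ee_frac p (a * inv_p al * (- g * z^2 - 2 * x * z + b * x^2)) * gauss_sum p (a * inv_p g * al)"
proof -
  obtain k1 where k1: "g * inv_p g = 1 + int p * k1" using inv_p_eq[OF g_unit] by blast
  obtain k2 where k2: "al * inv_p al = 1 + int p * k2" using inv_p_eq[OF al_unit] by blast
  let ?Hy = "\<lambda>y. ee_frac p (- (2 * a * z * y)) * ee_frac p (a * inv_p g * (al * y^2 - 2 * x * y + d * x^2))"
  have Hyp: "periodic p ?Hy"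
  proof -
    have "ee_frac p (- (2 * a * z * (y + int p))) = ee_frac p (- (2 * a * z * y))" for y
      by (rule ee_frac_eq_if_dvd[OF p_pos]) Groebner_Basis.algebra
    moreover have "ee_frac p (a * inv_p g * (al * (y + int p)^2 - 2 * x * (y + int p) + d * x^2)) = ee_frac p (a * inv_p g * (al * y^2 - 2 * x * y + d * x^2))" for y
      by (rule ee_frac_eq_if_dvd[OF p_pos]) Groebner_Basis.algebra
    ultimately show ?thesis by (simp add: periodic_def)
  qed
  have "(\<Sum>y\<in>{0..<int p}. ?Hy y) = (\<Sum>y\<in>{0..<int p}. ?Hy (y + inv_p al * (x + g * z)))"
    by (rule sum_periodic_shift[OF p_pos Hyp, symmetric])
  also have "\<dots> = (\<Sum>y\<in>{0..<int p}. ee_frac p (a * inv_p al * (- g * z^2 - 2 * x * z + b * x^2)) * ee_frac p (a * inv_p g * al * y^2))"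
  proof (intro sum.cong refl)
    fix y
    have "ee_frac p (- (2 * a * z * (y + inv_p al * (x + g * z))) + a * inv_p g * (al * (y + inv_p al * (x + g * z))^2 - 2 * x * (y + inv_p al * (x + g * z)) + d * x^2))
        = ee_frac p (a * inv_p al * (- g * z^2 - 2 * x * z + b * x^2) + a * inv_p g * al * y^2)"
      by (rule ee_frac_eq_if_dvd[OF p_pos]) (use k1 k2 det in Groebner_Basis.algebra)
    then show "?Hy (y + inv_p al * (x + g * z)) = ee_frac p (a * inv_p al * (- g * z^2 - 2 * x * z + b * x^2)) * ee_frac p (a * inv_p g * al * y^2)" by (simp only: ee_frac_add)
  qed
  also have "\<dots> = ee_frac p (a * inv_p al * (- g * z^2 - 2 * x * z + b * x^2)) * gauss_sum p (a * inv_p g * al)" by (simp add: gauss_sum_def sum_distrib_left)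
  finally show ?thesis .
qed

lemma mat_action_S_units:
  assumes det: "al * d - b * g = 1" and f: "periodic p f"
    and g_unit: "\<not> int p dvd g" and al_unit: "\<not> int p dvd al"
  shows "weil p a GenS (mat_action al b g d f) z = mat_action (- g) (- d) al b f z"
proof -
  let ?gi = "inv_p g"
  note sumform = weil_S_mat_action_g_unit[OF g_unit, of al b d f z]
  let ?C = "\<lambda>x. a * inv_p al * (- g * z^2 - 2 * x * z + b * x^2)"
  note inner = sum_S_mat_action_units[OF det g_unit al_unit, of z]
  have giu: "[g * ?gi = 1] (mod int p)" using inv_p_cong[OF g_unit] .
  have cst: "ngs (- a) * ngs (- a * g) * ngs (a * ?gi * al) = ngs (- a * al)" by (rule ngs_cocycle_units[OF g_unit al_unit giu])
  have "weil p a GenS (mat_action al b g d f) z = ngs (- a) * (ngs (- a * g) / sqrtc p) / sqrtc p * gauss_sum p (a * ?gi * al) *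
      (\<Sum>x\<in>{0..<int p}. ee_frac p (?C x) * f x)"
  proof -
    have r: "(\<Sum>x\<in>{0..<int p}. f x * (ee_frac p (?C x) * gauss_sum p (a * ?gi * al))) = gauss_sum p (a * ?gi * al) * (\<Sum>x\<in>{0..<int p}. ee_frac p (?C x) * f x)"
      by (simp add: sum_distrib_left ac_simps)
    have "weil p a GenS (mat_action al b g d f) z = ngs (- a) * (ngs (- a * g) / sqrtc p) / sqrtc p *
      (\<Sum>x\<in>{0..<int p}. f x * (ee_frac p (?C x) * gauss_sum p (a * ?gi * al)))" by (simp only: sumform inner)
    also have "\<dots> = ngs (- a) * (ngs (- a * g) / sqrtc p) / sqrtc p * (gauss_sum p (a * ?gi * al) * (\<Sum>x\<in>{0..<int p}. ee_frac p (?C x) * f x))"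
      by (simp only: r)
    finally show ?thesis by (simp only: mult.assoc[symmetric])
  qed
  also have "ngs (- a) * (ngs (- a * g) / sqrtc p) / sqrtc p * gauss_sum p (a * ?gi * al) = ngs (- a * al) / sqrtc p"
  proof -
    have "gauss_sum p (a * ?gi * al) = ngs (a * ?gi * al) * sqrtc p" using sqrtc_nonzero[OF p_pos] by (simp add: ngs_def)
    then have "ngs (- a) * (ngs (- a * g) / sqrtc p) / sqrtc p * gauss_sum p (a * ?gi * al) = (ngs (- a) * ngs (- a * g) * ngs (a * ?gi * al)) / sqrtc p"
      using sqrtc_nonzero[OF p_pos] by (simp add: field_simps)
    then show ?thesis using cst by simp
  qed
  finally show ?thesis using al_unit by (simp add: mat_action_def ac_simps)
qed

lemma mat_action_S:
  assumes det: "al * d - b * g = 1" and f: "periodic p f"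
  shows "weil p a GenS (mat_action al b g d f) = mat_action (- g) (- d) al b f"
proof
  fix z
  consider "int p dvd g" | "\<not> int p dvd g" "int p dvd al" | "\<not> int p dvd g" "\<not> int p dvd al"
    by blast
  then show "weil p a GenS (mat_action al b g d f) z = mat_action (- g) (- d) al b f z"
    by cases (simp_all add: mat_action_S_dvd_g[OF det f] mat_action_S_dvd_al[OF det f]
        mat_action_S_units[OF det f])
qed

lemma word_mat_det: "word_mat w = ((al, b), (g, d)) \<Longrightarrow> al * d - b * g = 1"
proof (induction w arbitrary: al b g d)
  case Nil then show ?case by (simp add: mid_def)
next
  case (Cons x w)
  obtain al' b' g' d' where m: "word_mat w = ((al', b'), (g', d'))" by (metis prod.exhaust)
  have det: "al' * d' - b' * g' = 1" using Cons.IH[OF m] .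
  show ?case
  proof (cases x)
    case GenS then show ?thesis using Cons.prems m det by (auto simp: algebra_simps)
  next
    case GenT then show ?thesis using Cons.prems m det by (auto simp: algebra_simps)
  qed
qed

lemma word_act_mat_action:
  assumes f: "periodic p f"
  shows "word_act (weil p a) w f = (case word_mat w of ((al, b), (g, d)) \<Rightarrow> mat_action al b g d f)"
proof (induction w)
  case Nil
  have "mat_action 1 0 0 1 f = f" using ngs_minus_a_nonzero by (simp add: mat_action_def fun_eq_iff)
  then show ?case by (simp add: mid_def)
next
  case (Cons x w)
  obtain al b g d where m: "word_mat w = ((al, b), (g, d))" by (metis prod.exhaust)
  have det: "al * d - b * g = 1" using word_mat_det[OF m] .
  show ?case
  proof (cases x)
    case GenS
    have "word_mat (x # w) = ((- g, - d), (al, b))" using GenS m by simp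
    then show ?thesis using Cons.IH m GenS mat_action_S[OF det f] by simp
  next
    case GenT
    have "word_mat (x # w) = ((al + g, b + d), (g, d))" using GenT m by simp
    then show ?thesis using Cons.IH m GenT mat_action_T[OF det f] by simp
  qed
qed

lemma Gamma_p_acts_trivially:
  assumes G: "in_Gamma p (word_mat w)" and f: "periodic p f"
  shows "word_act (weil p a) w f = f"
proof -
  obtain al b g d where m: "word_mat w = ((al, b), (g, d))" by (metis prod.exhaust)
  have c: "[al = 1] (mod int p)" "[b = 0] (mod int p)" "[g = 0] (mod int p)"
    using G m by (auto simp: in_Gamma_def)
  have g: "int p dvd g" using c(3) by (simp add: cong_0_iff)
  have bb: "int p dvd b" using c(2) by (simp add: cong_0_iff)
  have 1: "ngs (- a * al) = ngs (- a)" using ngs_cong c(1) by (metis cong_scalar_left mult.right_neutral)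
  have 2: "ee_frac p (a * al * b * y^2) = 1" for y
    using ee_frac_eq_1_iff[OF p_pos] bb by (metis dvd_mult dvd_mult2 mult.commute)
  have 3: "f (al * y) = f y" for y using periodic_cong[OF f] c(1) by (metis cong_scalar_right mult_1)
  show ?thesis using word_act_mat_action[OF f, of w] m g 1 2 3 ngs_minus_a_nonzero by (simp add: mat_action_def fun_eq_iff)
qed

end

text \<open>The Weyl operator of (u, v) in the Heisenberg group of L_q(a); SL_2(Z) permutes these through
  heis_transform.\<close>

definition heis :: "nat \<Rightarrow> int \<Rightarrow> int \<Rightarrow> int \<Rightarrow> (int \<Rightarrow> complex) \<Rightarrow> (int \<Rightarrow> complex)" where
  "heis q a u v f = (\<lambda>x. ee_frac q (a * (2 * v * x + u * v)) * f (x + u))"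

definition heis_transform :: "mat2 \<Rightarrow> int \<Rightarrow> int \<Rightarrow> int \<times> int" where
  "heis_transform M u v = (case M of ((al, b), (g, d)) \<Rightarrow> (d * u - g * v, - b * u + al * v))"

lemma heis_T: "weil q a GenT (heis q a u v f) = heis q a u (v - u) (weil q a GenT f)"
proof
  fix x
  have "ee_frac q (a * x^2) * ee_frac q (a * (2 * v * x + u * v)) = ee_frac q (a * (2 * (v - u) * x + u * (v - u))) * ee_frac q (a * (x + u)^2)"
  proof -
    have "a * x^2 + a * (2 * v * x + u * v) = a * (2 * (v - u) * x + u * (v - u)) + a * (x + u)^2"
      by (simp add: power2_eq_square algebra_simps)
    then show ?thesis by (metis ee_frac_add)
  qed
  then show "weil q a GenT (heis q a u v f) x = heis q a u (v - u) (weil q a GenT f) x"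
    by (simp add: weil_T heis_def ac_simps)
qed

lemma heis_S:
  assumes q: "q > 0" and f: "periodic q f"
  shows "weil q a GenS (heis q a u v f) = heis q a (- v) u (weil q a GenS f)"
proof
  fix y
  let ?F = "\<lambda>x. ee_frac q (- (2 * a * y * (x - u))) * ee_frac q (a * (2 * v * (x - u) + u * v)) * f x"
  have Fp: "periodic q ?F"
  proof -
    have "ee_frac q (- (2 * a * y * (x + int q - u))) = ee_frac q (- (2 * a * y * (x - u)))" for x
      by (rule ee_frac_eq_if_dvd[OF q]) (simp add: algebra_simps)
    moreover have "ee_frac q (a * (2 * v * (x + int q - u) + u * v)) = ee_frac q (a * (2 * v * (x - u) + u * v))" for x
      by (rule ee_frac_eq_if_dvd[OF q]) (simp add: algebra_simps)
    ultimately show ?thesis using f by (simp add: periodic_def)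
  qed
  have "(\<Sum>x\<in>{0..<int q}. ee_frac q (- (2 * a * y * x)) * (ee_frac q (a * (2 * v * x + u * v)) * f (x + u)))
      = (\<Sum>x\<in>{0..<int q}. ?F (x + u))" by (simp add: ac_simps)
  also have "\<dots> = (\<Sum>x\<in>{0..<int q}. ?F x)" by (rule sum_periodic_shift[OF q Fp])
  also have "\<dots> = ee_frac q (a * (2 * u * y + - v * u)) * (\<Sum>x\<in>{0..<int q}. ee_frac q (- (2 * a * (y + - v) * x)) * f x)"
  proof -
    have pw: "?F x = ee_frac q (a * (2 * u * y + - v * u)) * (ee_frac q (- (2 * a * (y + - v) * x)) * f x)" for x
    proof -
      have "- (2 * a * y * (x - u)) + a * (2 * v * (x - u) + u * v) = a * (2 * u * y + - v * u) + - (2 * a * (y + - v) * x)"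
        by (simp add: algebra_simps)
      then have "ee_frac q (- (2 * a * y * (x - u))) * ee_frac q (a * (2 * v * (x - u) + u * v)) = ee_frac q (a * (2 * u * y + - v * u)) * ee_frac q (- (2 * a * (y + - v) * x))"
        by (metis ee_frac_add)
      then show ?thesis by (simp add: ac_simps)
    qed
    then show ?thesis by (simp only: pw sum_distrib_left)
  qed
  finally show "weil q a GenS (heis q a u v f) y = heis q a (- v) u (weil q a GenS f) y"
    by (simp add: weil_S heis_def ac_simps)
qed

lemma heis_word_act:
  assumes q: "q > 0" and f: "periodic q f"
  shows "word_act (weil q a) w (heis q a u v f) = heis q a (fst (heis_transform (word_mat w) u v)) (snd (heis_transform (word_mat w) u v)) (word_act (weil q a) w f)"
proof (induction w arbitrary: u v)
  case Nil then show ?case by (simp add: heis_transform_def mid_def)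
next
  case (Cons x w)
  obtain al b g d where m: "word_mat w = ((al, b), (g, d))" by (metis prod.exhaust)
  have wf: "periodic q (word_act (weil q a) w f)" using word_act_periodic[OF q f] .
  show ?case
  proof (cases x)
    case GenS
    have "heis_transform (word_mat (x # w)) u v = (- (- b * u + al * v), d * u - g * v)" using GenS m by (simp add: heis_transform_def algebra_simps)
    then show ?thesis using Cons.IH[of u v] GenS m heis_S[OF q wf] by (simp add: heis_transform_def)
  next
    case GenT
    have "heis_transform (word_mat (x # w)) u v = (d * u - g * v, (- b * u + al * v) - (d * u - g * v))" using GenT m by (simp add: heis_transform_def algebra_simps)
    then show ?thesis using Cons.IH[of u v] GenT m heis_T by (simp add: heis_transform_def)
  qed
qed

lemma heis_cong:
  assumes q: "q > 0" and f: "periodic q f" and u: "[u = u'] (mod int q)" and v: "[v = v'] (mod int q)"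
  shows "heis q a u v f = heis q a u' v' f"
proof
  fix x
  have "int q dvd u - u'" using u by (simp add: cong_iff_dvd_diff)
  then obtain k where "u - u' = int q * k" by blast
  then have k: "u - u' - int q * k = 0" by simp
  have "int q dvd v - v'" using v by (simp add: cong_iff_dvd_diff)
  then obtain l where "v - v' = int q * l" by blast
  then have l: "v - v' - int q * l = 0" by simp
  have "ee_frac q (a * (2 * v * x + u * v)) = ee_frac q (a * (2 * v' * x + u' * v'))"
    by (rule ee_frac_eq_if_dvd[OF q]) (use k l in Groebner_Basis.algebra)
  moreover have "f (x + u) = f (x + u')" using periodic_cong[OF f] u by (simp add: cong_add_lcancel)
  ultimately show "heis q a u v f x = heis q a u' v' f x" by (simp add: heis_def)
qed

lemma Gamma_commutes_heis:
  assumes q: "q > 0" and f: "periodic q f" and G: "in_Gamma q (word_mat w)"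
  shows "word_act (weil q a) w (heis q a u v f) = heis q a u v (word_act (weil q a) w f)"
proof -
  obtain al b g d where m: "word_mat w = ((al, b), (g, d))" by (metis prod.exhaust)
  have c: "[al = 1] (mod int q)" "[b = 0] (mod int q)" "[g = 0] (mod int q)" "[d = 1] (mod int q)"
    using G m by (auto simp: in_Gamma_def)
  have "[d * u - g * v = 1 * u - 0 * v] (mod int q)" using c by (intro cong_diff cong_mult cong_refl)
  then have 1: "[d * u - g * v = u] (mod int q)" by simp
  have "[- b * u + al * v = - 0 * u + 1 * v] (mod int q)" using c by (intro cong_add cong_mult cong_refl cong_minus_minus_iff[THEN iffD2])
  then have 2: "[- b * u + al * v = v] (mod int q)" by simp
  have wf: "periodic q (word_act (weil q a) w f)" using word_act_periodic[OF q f] .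
  show ?thesis using heis_word_act[OF q f, where w=w and u=u and v=v] m heis_cong[OF q wf 1 2] by (simp add: heis_transform_def)
qed

definition delta0 :: "nat \<Rightarrow> int \<Rightarrow> complex" where
  "delta0 q = (\<lambda>x. if int q dvd x then 1 else 0)"

lemma delta0_periodic: "periodic q (delta0 q)"
  by (simp add: periodic_def delta0_def)

lemma heis_delta0: assumes q: "q > 0" shows "heis q a 0 1 (delta0 q) = delta0 q"
proof
  fix x show "heis q a 0 1 (delta0 q) x = delta0 q x"
    using ee_frac_eq_1_iff[OF q, of "a * (2 * 1 * x + 0 * 1)"] by (auto simp: heis_def delta0_def)
qed

lemma periodic_eq_sum_heis_delta0:
  assumes q: "q > 0" and f: "periodic q f"
  shows "f = (\<lambda>x. \<Sum>y\<in>{0..<int q}. f y * heis q a (- y) 0 (delta0 q) x)"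
proof
  fix x
  have "(\<Sum>y\<in>{0..<int q}. f y * heis q a (- y) 0 (delta0 q) x) = (\<Sum>y\<in>{0..<int q}. if int q dvd (- x) + y then f y else 0)"
  proof (intro sum.cong refl)
    fix y
    have "int q dvd x + - y \<longleftrightarrow> int q dvd (- x) + y" by (metis dvd_minus_iff minus_add_distrib minus_minus)
    then show "f y * heis q a (- y) 0 (delta0 q) x = (if int q dvd (- x) + y then f y else 0)"
      by (simp add: heis_def delta0_def)
  qed
  also have "\<dots> = f ((- (- x)) mod int q)" by (rule sum_delta_mod[OF q])
  also have "\<dots> = f x" using periodic_mod[OF f] by simp
  finally show "f x = (\<Sum>y\<in>{0..<int q}. f y * heis q a (- y) 0 (delta0 q) x)" by simp
qed

text \<open>The image of delta0 is fixed by heis 0 1, which multiplies the value at x by e(2ax/q);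
  as 2a is a unit mod q, it is supported on qZ.\<close>

lemma Gamma_image_delta0:
  assumes q: "q > 0" and ca: "coprime (2 * a) (int q)" and G: "in_Gamma q (word_mat w)"
  shows "word_act (weil q a) w (delta0 q) = (\<lambda>x. word_act (weil q a) w (delta0 q) 0 * delta0 q x)"
    (is "?g = _")
proof
  fix x
  have gp: "periodic q ?g" using word_act_periodic[OF q delta0_periodic] .
  have "?g = heis q a 0 1 ?g"
    using Gamma_commutes_heis[OF q delta0_periodic G, where a=a and u=0 and v=1] heis_delta0[OF q] by simp
  then have gx: "?g x = ee_frac q (a * (2 * x)) * ?g x"
    by (metis heis_def add_0_right mult_1_right mult_zero_left add.right_neutral mult_1 mult.commute)
  show "?g x = ?g 0 * delta0 q x"
  proof (cases "int q dvd x")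
    case True
    then have "[x = 0] (mod int q)" by (simp add: cong_0_iff)
    then show ?thesis using periodic_cong[OF gp] True by (simp add: delta0_def)
  next
    case False
    have "?g x = 0"
    proof (rule ccontr)
      assume "?g x \<noteq> 0"
      then have "ee_frac q (a * (2 * x)) = 1" using gx by simp
      then have "int q dvd (2 * a) * x" using ee_frac_eq_1_iff[OF q] by (simp add: ac_simps)
      then show False using coprime_dvd_mult_cancel[OF ca] False by blast
    qed
    then show ?thesis using False by (simp add: delta0_def)
  qed
qed

text \<open>The translates heis (-y) 0 delta0 form a basis, and Gamma(q) commutes with them.\<close>

lemma Gamma_acts_by_scalar:
  assumes q: "q > 0" and ca: "coprime (2 * a) (int q)" and G: "in_Gamma q (word_mat w)"
  obtains c where "\<And>f. periodic q f \<Longrightarrow> word_act (weil q a) w f = (\<lambda>x. c * f x)"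
proof -
  let ?A = "word_act (weil q a) w"
  let ?c = "?A (delta0 q) 0"
  have dy: "?A (heis q a (- y) 0 (delta0 q)) = (\<lambda>x. ?c * heis q a (- y) 0 (delta0 q) x)" for y
  proof -
    have "?A (heis q a (- y) 0 (delta0 q)) = heis q a (- y) 0 (?A (delta0 q))"
      using Gamma_commutes_heis[OF q delta0_periodic G] .
    also have "\<dots> = heis q a (- y) 0 (\<lambda>x. ?c * delta0 q x)" using Gamma_image_delta0[OF q ca G] by simp
    also have "\<dots> = (\<lambda>x. ?c * heis q a (- y) 0 (delta0 q) x)" by (simp add: heis_def fun_eq_iff)
    finally show ?thesis .
  qed
  have "?A f = (\<lambda>x. ?c * f x)" if f: "periodic q f" for f
  proof -
    note decomp = periodic_eq_sum_heis_delta0[OF q f, where a=a]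
    have "?A f = ?A (\<lambda>x. \<Sum>y\<in>{0..<int q}. f y * heis q a (- y) 0 (delta0 q) x)" using decomp by simp
    also have "\<dots> = (\<lambda>x. \<Sum>y\<in>{0..<int q}. f y * ?A (heis q a (- y) 0 (delta0 q)) x)"
      by (rule word_act_sum) simp
    also have "\<dots> = (\<lambda>x. ?c * (\<Sum>y\<in>{0..<int q}. f y * heis q a (- y) 0 (delta0 q) x))"
      by (simp add: dy sum_distrib_left ac_simps)
    also have "\<dots> = (\<lambda>x. ?c * f x)" using decomp by metis
    finally show ?thesis .
  qed
  then show ?thesis using that by blast
qed

lemma ee_frac_scale: assumes "m > 0" shows "ee_frac (m * n) (int m * r) = ee_frac n r"
  using assms by (simp add: ee_frac_def)

lemma ee_frac_1: "ee_frac 1 r = 1" using ee_frac_eq_1_iff[of 1 r] by simp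

lemma sum_if_eq_0: "(\<Sum>r\<in>{0..<int p}. if r = 0 then X else 0) = (X :: complex)" if "p > 0"
  using that by (simp add: sum.delta)

locale weil_lift = odd_prime_unit +
  fixes \<alpha> :: nat
  assumes a2: "\<alpha> \<ge> 2"
begin

abbreviation "q \<equiv> p ^ \<alpha>"
abbreviation "q' \<equiv> p ^ (\<alpha> - 2)"
abbreviation "m \<equiv> p ^ (\<alpha> - 1)"

lemma q'_pos: "q' > 0" using p_gt1 by simp
lemma m_pos: "m > 0" using p_gt1 by simp
lemma q_pos: "q > 0" using p_gt1 by simp
lemma alpha_eq: "\<alpha> = Suc (Suc (\<alpha> - 2))" "\<alpha> - 1 = Suc (\<alpha> - 2)" using a2 by auto
lemma q_eq_m_p: "q = m * p" by (subst alpha_eq(1), subst alpha_eq(2)) (simp add: ac_simps)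
lemma m_eq_q'_p: "m = q' * p" by (subst alpha_eq(2)) (simp add: ac_simps)
lemma q_eq_p_p_q': "q = p * (p * q')" using q_eq_m_p m_eq_q'_p by (simp add: ac_simps)
lemma gauss_sum_concentrates_on_pZ:
  assumes c: "\<not> int p dvd c"
  shows "gauss_sum q c = (\<Sum>r\<in>{0..<int p * int q'}. ee_frac q (c * r^2) * (if int p dvd r then of_nat p else 0))"
proof -
  have "gauss_sum q c = (\<Sum>x\<in>{0..<int m * int p}. ee_frac q (c * x^2))" by (simp add: gauss_sum_def q_eq_m_p)
  also have "\<dots> = (\<Sum>r\<in>{0..<int m}. \<Sum>t\<in>{0..<int p}. ee_frac q (c * (r + int m * t)^2))"
    by (rule sum_split_residues) (use m_pos p_gt1 in auto)
  also have "\<dots> = (\<Sum>r\<in>{0..<int m}. ee_frac q (c * r^2) * (if int p dvd r then of_nat p else 0))"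
  proof (intro sum.cong refl)
    fix r
    have e: "ee_frac q (c * (r + int m * t)^2) = ee_frac q (c * r^2) * ee_frac p (t * (2 * c * r))" for t
    proof -
      have "ee_frac q (c * (r + int m * t)^2) = ee_frac q (c * r^2 + int m * (t * (2 * c * r)))"
      proof (rule ee_frac_eq_if_dvd[OF q_pos])
        have "c * (r + int m * t)^2 - (c * r^2 + int m * (t * (2 * c * r))) = int q * (c * int q' * t^2)"
          using q_eq_m_p m_eq_q'_p by (simp add: power2_eq_square algebra_simps)
        then show "int q dvd c * (r + int m * t)^2 - (c * r^2 + int m * (t * (2 * c * r)))" by simp
      qed
      also have "\<dots> = ee_frac q (c * r^2) * ee_frac (m * p) (int m * (t * (2 * c * r)))" by (simp add: ee_frac_add q_eq_m_p)
      also have "ee_frac (m * p) (int m * (t * (2 * c * r))) = ee_frac p (t * (2 * c * r))" by (rule ee_frac_scale[OF m_pos])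
      finally show ?thesis .
    qed
    have cnd: "int p dvd 2 * c * r \<longleftrightarrow> int p dvd r" using p_dvd_mult_iff p_not_dvd_2 c by simp
    have "(\<Sum>t\<in>{0..<int p}. ee_frac q (c * (r + int m * t)^2)) = ee_frac q (c * r^2) * (\<Sum>t\<in>{0..<int p}. ee_frac p (t * (2 * c * r)))"
      by (simp only: e sum_distrib_left)
    also have "(\<Sum>t\<in>{0..<int p}. ee_frac p (t * (2 * c * r))) = (if int p dvd 2 * c * r then of_nat p else 0)"
      using sum_ee_frac_geometric[of p "2 * c * r"] p_gt1 by simp
    finally show "(\<Sum>t\<in>{0..<int p}. ee_frac q (c * (r + int m * t)^2)) = ee_frac q (c * r^2) * (if int p dvd r then of_nat p else 0)"
      by (simp only: cnd)
  qed
  also have "\<dots> = (\<Sum>r\<in>{0..<int p * int q'}. ee_frac q (c * r^2) * (if int p dvd r then of_nat p else 0))"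
    using m_eq_q'_p by (simp add: ac_simps)
  finally show ?thesis .
qed

lemma gauss_sum_lift: assumes c: "\<not> int p dvd c" shows "gauss_sum q c = of_nat p * gauss_sum q' c"
proof -
  have "gauss_sum q c = (\<Sum>r\<in>{0..<int p * int q'}. ee_frac q (c * r^2) * (if int p dvd r then of_nat p else 0))"
    by (rule gauss_sum_concentrates_on_pZ[OF c])
  also have "\<dots> = (\<Sum>r0\<in>{0..<int p}. \<Sum>z\<in>{0..<int q'}. ee_frac q (c * (r0 + int p * z)^2) * (if int p dvd (r0 + int p * z) then of_nat p else 0))"
    by (rule sum_split_residues) (use q'_pos p_gt1 in auto)
  also have "\<dots> = (\<Sum>r0\<in>{0..<int p}. if r0 = 0 then (\<Sum>z\<in>{0..<int q'}. ee_frac q (c * (int p * z)^2) * of_nat p) else 0)"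
  proof (intro sum.cong refl)
    fix r0 assume r0: "r0 \<in> {0..<int p}"
    show "(\<Sum>z\<in>{0..<int q'}. ee_frac q (c * (r0 + int p * z)^2) * (if int p dvd (r0 + int p * z) then of_nat p else 0)) =
        (if r0 = 0 then (\<Sum>z\<in>{0..<int q'}. ee_frac q (c * (int p * z)^2) * of_nat p) else 0)"
    proof (cases "r0 = 0")
      case False
      then have "\<not> int p dvd r0 + int p * z" for z using r0 by (simp add: dvd_add_left_iff zdvd_not_zless)
      then show ?thesis using False by simp
    qed simp
  qed
  also have "\<dots> = (\<Sum>z\<in>{0..<int q'}. ee_frac q (c * (int p * z)^2) * of_nat p)" using sum_if_eq_0 p_gt1 by simp
  also have "\<dots> = of_nat p * gauss_sum q' c"
  proof -
    have "ee_frac q (c * (int p * z)^2) = ee_frac q' (c * z^2)" for z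
    proof -
      have "ee_frac q (c * (int p * z)^2) = ee_frac ((p * p) * q') (int (p * p) * (c * z^2))"
        using q_eq_p_p_q' by (simp add: power2_eq_square ac_simps)
      also have "\<dots> = ee_frac q' (c * z^2)" by (rule ee_frac_scale) (use p_gt1 in simp)
      finally show ?thesis .
    qed
    then show ?thesis by (simp add: gauss_sum_def sum_distrib_left ac_simps)
  qed
  finally show ?thesis .
qed

lemma sqrtc_lift: "sqrtc q = of_nat p * sqrtc q'"
proof -
  have "sqrt (real q) = sqrt (real p * real p) * sqrt (real q')" using q_eq_p_p_q' by (simp add: real_sqrt_mult)
  also have "sqrt (real p * real p) = real p" by simp
  finally show ?thesis by simp
qed

lemma sigma_lift: "sigma q a = sigma q' a"
proof -
  have "\<not> int p dvd - a" using p_not_dvd_a by simp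
  then have "gauss_sum q (- a) = of_nat p * gauss_sum q' (- a)" by (rule gauss_sum_lift)
  then show ?thesis using p_gt1 by (simp add: sigma_gauss_sum sqrtc_lift)
qed

text \<open>e_y \<mapsto> e_(py); like the embedding that defines W_1, it is equivariant.\<close>

definition iota :: "(int \<Rightarrow> complex) \<Rightarrow> (int \<Rightarrow> complex)" where
  "iota g = (\<lambda>x. if int p dvd x then g (x div int p) else 0)"

lemma iota_periodic: assumes g: "periodic q' g" shows "periodic q (iota g)"
proof -
  have "iota g (x + int q) = iota g x" for x
  proof -
    have d: "int p dvd x + int q \<longleftrightarrow> int p dvd x" using q_eq_p_p_q' by (simp add: dvd_add_left_iff)
    have "(x + int q) div int p = x div int p + int q' * int p" if "int p dvd x"
      using that q_eq_p_p_q' p_gt1 by (auto simp: ac_simps)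
    then show ?thesis using d periodic_add_mult[OF g] by (simp add: iota_def)
  qed
  then show ?thesis by (simp add: periodic_def)
qed

lemma iota_T: "weil q a GenT (iota g) = iota (weil q' a GenT g)"
proof
  fix x
  show "weil q a GenT (iota g) x = iota (weil q' a GenT g) x"
  proof (cases "int p dvd x")
    case True
    then obtain z where z: "x = int p * z" by blast
    have "ee_frac q (a * x^2) = ee_frac ((p * p) * q') (int (p * p) * (a * z^2))" using q_eq_p_p_q' z by (simp add: power2_eq_square ac_simps)
    also have "\<dots> = ee_frac q' (a * z^2)" by (rule ee_frac_scale) (use p_gt1 in simp)
    finally show ?thesis using True z p_gt1 by (simp add: weil_T iota_def)
  qed (simp add: weil_T iota_def)
qed

lemma sum_S_iota: "(\<Sum>x\<in>{0..<int q}. ee_frac q (- (2 * a * y * x)) * iota g x) = (\<Sum>t\<in>{0..<int m}. ee_frac m (- (2 * a * y * t)) * g t)"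
proof -
  have "(\<Sum>x\<in>{0..<int q}. ee_frac q (- (2 * a * y * x)) * iota g x) = (\<Sum>x\<in>{0..<int p * int m}. ee_frac q (- (2 * a * y * x)) * iota g x)"
    using q_eq_m_p by (simp add: ac_simps)
  also have "\<dots> = (\<Sum>r\<in>{0..<int p}. \<Sum>t\<in>{0..<int m}. ee_frac q (- (2 * a * y * (r + int p * t))) * iota g (r + int p * t))"
    by (rule sum_split_residues) (use m_pos p_gt1 in auto)
  also have "\<dots> = (\<Sum>r\<in>{0..<int p}. if r = 0 then (\<Sum>t\<in>{0..<int m}. ee_frac m (- (2 * a * y * t)) * g t) else 0)"
  proof (intro sum.cong refl)
    fix r assume r: "r \<in> {0..<int p}"
    show "(\<Sum>t\<in>{0..<int m}. ee_frac q (- (2 * a * y * (r + int p * t))) * iota g (r + int p * t)) =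
        (if r = 0 then (\<Sum>t\<in>{0..<int m}. ee_frac m (- (2 * a * y * t)) * g t) else 0)"
    proof (cases "r = 0")
      case True
      have "ee_frac q (- (2 * a * y * (int p * t))) = ee_frac m (- (2 * a * y * t))" for t
      proof -
        have "ee_frac q (- (2 * a * y * (int p * t))) = ee_frac (p * m) (int p * (- (2 * a * y * t)))" using q_eq_m_p by (simp add: ac_simps)
        also have "\<dots> = ee_frac m (- (2 * a * y * t))" by (rule ee_frac_scale) (use p_gt1 in simp)
        finally show ?thesis .
      qed
      then show ?thesis using True p_gt1 by (simp add: iota_def)
    next
      case False
      then have "\<not> int p dvd r + int p * t" for t using r by (simp add: dvd_add_left_iff zdvd_not_zless)
      then show ?thesis using False by (simp add: iota_def)
    qed
  qed
  also have "\<dots> = (\<Sum>t\<in>{0..<int m}. ee_frac m (- (2 * a * y * t)) * g t)" using sum_if_eq_0 p_gt1 by simp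
  finally show ?thesis .
qed

lemma sum_S_periodic_lower:
  assumes g: "periodic q' g"
  shows "(\<Sum>t\<in>{0..<int m}. ee_frac m (- (2 * a * y * t)) * g t) = (if int p dvd y then of_nat p else 0) * (\<Sum>t0\<in>{0..<int q'}. ee_frac m (- (2 * a * y * t0)) * g t0)"
proof -
  have "(\<Sum>t\<in>{0..<int m}. ee_frac m (- (2 * a * y * t)) * g t) = (\<Sum>t\<in>{0..<int q' * int p}. ee_frac m (- (2 * a * y * t)) * g t)"
    using m_eq_q'_p by (simp add: ac_simps)
  also have "\<dots> = (\<Sum>t0\<in>{0..<int q'}. \<Sum>s\<in>{0..<int p}. ee_frac m (- (2 * a * y * (t0 + int q' * s))) * g (t0 + int q' * s))"
    by (rule sum_split_residues) (use q'_pos p_gt1 in auto)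
  also have "\<dots> = (\<Sum>t0\<in>{0..<int q'}. ee_frac m (- (2 * a * y * t0)) * g t0 * (\<Sum>s\<in>{0..<int p}. ee_frac p (s * (- (2 * a * y)))))"
  proof (intro sum.cong refl)
    fix t0
    have "ee_frac m (- (2 * a * y * (t0 + int q' * s))) * g (t0 + int q' * s) = ee_frac m (- (2 * a * y * t0)) * g t0 * ee_frac p (s * (- (2 * a * y)))" for s
    proof -
      have "ee_frac m (- (2 * a * y * (t0 + int q' * s))) = ee_frac m (- (2 * a * y * t0) + int q' * (s * (- (2 * a * y))))"
        by (simp add: algebra_simps)
      also have "\<dots> = ee_frac m (- (2 * a * y * t0)) * ee_frac (q' * p) (int q' * (s * (- (2 * a * y))))" by (simp only: m_eq_q'_p[symmetric] ee_frac_add)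
      also have "ee_frac (q' * p) (int q' * (s * (- (2 * a * y)))) = ee_frac p (s * (- (2 * a * y)))" by (rule ee_frac_scale[OF q'_pos])
      finally show ?thesis using periodic_add_mult[OF g] by simp
    qed
    then show "(\<Sum>s\<in>{0..<int p}. ee_frac m (- (2 * a * y * (t0 + int q' * s))) * g (t0 + int q' * s)) =
        ee_frac m (- (2 * a * y * t0)) * g t0 * (\<Sum>s\<in>{0..<int p}. ee_frac p (s * (- (2 * a * y))))"
      by (simp add: sum_distrib_left)
  qed
  also have "(\<Sum>s\<in>{0..<int p}. ee_frac p (s * (- (2 * a * y)))) = (if int p dvd y then of_nat p else 0)"
  proof -
    have "int p dvd - (2 * a * y) \<longleftrightarrow> int p dvd y" using p_dvd_mult_iff p_not_dvd_2 p_not_dvd_a by simp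
    then show ?thesis using sum_ee_frac_geometric[of p "- (2 * a * y)"] p_gt1 by simp
  qed
  also have "(\<Sum>t0\<in>{0..<int q'}. ee_frac m (- (2 * a * y * t0)) * g t0 * (if int p dvd y then of_nat p else 0)) =
      (\<Sum>t0\<in>{0..<int q'}. ee_frac m (- (2 * a * y * t0)) * g t0) * (if int p dvd y then of_nat p else 0)"
    by (rule sum_distrib_right[symmetric])
  also have "\<dots> = (if int p dvd y then of_nat p else 0) * (\<Sum>t0\<in>{0..<int q'}. ee_frac m (- (2 * a * y * t0)) * g t0)"
    by (rule mult.commute)
  finally show ?thesis .
qed

lemma iota_S: assumes g: "periodic q' g" shows "weil q a GenS (iota g) = iota (weil q' a GenS g)"
proof
  fix y
  let ?T = "\<lambda>y1. (\<Sum>t0\<in>{0..<int q'}. ee_frac q' (- (2 * a * y1 * t0)) * g t0)"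
  show "weil q a GenS (iota g) y = iota (weil q' a GenS g) y"
  proof (cases "int p dvd y")
    case False
    then show ?thesis using sum_S_iota sum_S_periodic_lower[OF g] by (simp add: weil_S iota_def)
  next
    case True
    then obtain y1 where y1: "y = int p * y1" by blast
    have "ee_frac m (- (2 * a * y * t0)) = ee_frac q' (- (2 * a * y1 * t0))" for t0
    proof -
      have "ee_frac m (- (2 * a * y * t0)) = ee_frac (p * q') (int p * (- (2 * a * y1 * t0)))" using m_eq_q'_p y1 by (simp add: ac_simps)
      also have "\<dots> = ee_frac q' (- (2 * a * y1 * t0))" by (rule ee_frac_scale) (use p_gt1 in simp)
      finally show ?thesis .
    qed
    then have "weil q a GenS (iota g) y = sigma q a / sqrtc q * (of_nat p * ?T y1)"
      using sum_S_iota sum_S_periodic_lower[OF g] True by (simp add: weil_S)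
    also have "\<dots> = sigma q' a / sqrtc q' * ?T y1"
      using sigma_lift sqrtc_lift p_gt1 sqrtc_nonzero[OF q'_pos] by (simp add: field_simps)
    also have "\<dots> = iota (weil q' a GenS g) y" using True y1 p_gt1 by (simp add: weil_S iota_def)
    finally show ?thesis .
  qed
qed

lemma iota_word: assumes g: "periodic q' g"
  shows "word_act (weil q a) w (iota g) = iota (word_act (weil q' a) w g)"
proof (induction w)
  case Nil then show ?case by simp
next
  case (Cons x w)
  have wg: "periodic q' (word_act (weil q' a) w g)" using word_act_periodic[OF q'_pos g] .
  show ?case
  proof (cases x)
    case GenS then show ?thesis using Cons iota_S[OF wg] by simp
  next
    case GenT then show ?thesis using Cons iota_T by simp
  qed
qed

lemma Gamma_trivial_if_trivial_below:
  assumes G: "in_Gamma q (word_mat w)"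
    and below: "\<And>g. periodic q' g \<Longrightarrow> word_act (weil q' a) w g = g"
    and f: "periodic q f"
  shows "word_act (weil q a) w f = f"
proof -
  have c2a: "coprime (2 * a) (int q)"
    using coprime_2_p ca by (simp add: of_nat_power coprime_power_right_iff)
  obtain c where c: "\<And>f. periodic q f \<Longrightarrow> word_act (weil q a) w f = (\<lambda>x. c * f x)"
    using Gamma_acts_by_scalar[OF q_pos c2a G] by blast
  let ?d = "iota (delta0 q')"
  have "word_act (weil q a) w ?d = iota (word_act (weil q' a) w (delta0 q'))"
    by (rule iota_word[OF delta0_periodic])
  also have "\<dots> = ?d" using below[OF delta0_periodic] by simp
  finally have "(\<lambda>x. c * ?d x) = ?d" using c[OF iota_periodic[OF delta0_periodic]] by simp
  then have "c * ?d 0 = ?d 0" by metis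
  moreover have "?d 0 = 1" by (simp add: iota_def delta0_def)
  ultimately have "c = 1" by simp
  then show ?thesis using c[OF f] by simp
qed

end

lemma ee_frac_Suc_0: "ee_frac (Suc 0) r = 1" using ee_frac_1 by simp

lemma weil_1_trivial: assumes f: "periodic 1 f" shows "weil 1 a g f = f"
proof -
  have fc: "f x = f 0" for x using periodic_cong[OF f, of x 0] by (simp add: cong_iff_mod_eq)
  show ?thesis
  proof (cases g)
    case GenT then show ?thesis by (simp add: weil_T ee_frac_1 ee_frac_Suc_0)
  next
    case GenS
    have "sigma 1 a = 1" by (simp add: sigma_gauss_sum gauss_sum_def ee_frac_1 ee_frac_Suc_0)
    moreover have "{0..<1::int} = {0}" by auto
    ultimately show ?thesis using GenS fc by (simp add: weil_S ee_frac_1 ee_frac_Suc_0 fun_eq_iff) (metis fc)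
  qed
qed

lemma word_act_1_trivial: "periodic 1 f \<Longrightarrow> word_act (weil 1 a) w f = f"
proof (induction w)
  case (Cons g w) then show ?case using weil_1_trivial by simp
qed simp

context odd_prime_unit begin

lemma Gamma_trivial_periodic:
  "in_Gamma (p ^ \<alpha>) (word_mat w) \<Longrightarrow> periodic (p ^ \<alpha>) f \<Longrightarrow> word_act (weil (p ^ \<alpha>) a) w f = f"
proof (induction \<alpha> arbitrary: f rule: less_induct)
  case (less \<alpha>)
  consider "\<alpha> = 0" | "\<alpha> = 1" | "\<alpha> \<ge> 2" by linarith
  then show ?case
  proof cases
    case 1 then show ?thesis using less.prems word_act_1_trivial by simp
  next
    case 2 then show ?thesis using less.prems Gamma_p_acts_trivially by simp
  next
    case 3
    interpret R: weil_lift p a \<alpha> using 3 by unfold_locales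
    have q'_dvd_q: "int R.q' dvd int R.q" using R.q_eq_p_p_q' by simp
    have "in_Gamma R.q' (word_mat w)"
      using less.prems(1) cong_dvd_modulus[OF _ q'_dvd_q] by (auto simp: in_Gamma_def split: prod.splits)
    then have "word_act (weil R.q' a) w g = g" if "periodic R.q' g" for g
      using less.IH[of "\<alpha> - 2"] 3 that by simp
    then show ?thesis using R.Gamma_trivial_if_trivial_below[OF less.prems(1) _ less.prems(2)] by blast
  qed
qed

end

context W1_setting begin

lemma Gamma_trivial_level: "Gamma_trivial (weil q a) (W1eps p \<alpha> \<epsilon>) q"
  unfolding Gamma_trivial_def using Gamma_trivial_periodic W1eps_periodic by blast

end

lemma iso_mod_W1eps_iff:
  assumes A: "W1_setting p a \<alpha> \<epsilon>" and B: "W1_setting p a' \<alpha>' \<epsilon>'"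
  shows "iso_mod (weil (p ^ \<alpha>) a) (W1eps p \<alpha> \<epsilon>) (weil (p ^ \<alpha>') a') (W1eps p \<alpha>' \<epsilon>')
    \<longleftrightarrow> p ^ \<alpha> = p ^ \<alpha>' \<and> \<epsilon> = \<epsilon>' \<and> (\<exists>x. [a * a' = x ^ 2] (mod int p))"
proof
  interpret A: W1_setting p a \<alpha> \<epsilon> by (rule A)
  interpret B: W1_setting p a' \<alpha>' \<epsilon>' by (rule B)
  assume "p ^ \<alpha> = p ^ \<alpha>' \<and> \<epsilon> = \<epsilon>' \<and> (\<exists>x. [a * a' = x ^ 2] (mod int p))"
  moreover from this have "\<alpha> = \<alpha>'"
    using A.p_gt1 power_inject_exp by blast
  ultimately show "iso_mod (weil (p ^ \<alpha>) a) (W1eps p \<alpha> \<epsilon>) (weil (p ^ \<alpha>') a') (W1eps p \<alpha>' \<epsilon>')"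
    using iso_mod_if_square_class[OF A B.ca] by blast
qed (rule iso_mod_invariants[OF A B])

theorem lemma2:
  fixes p \<alpha> :: nat and a :: int and \<epsilon> :: int
  assumes "prime p" and "odd p" and "\<alpha> \<ge> 1" and "coprime a (int p)" and "\<epsilon> \<in> {1, -1}"
  shows "irreducible_mod (weil (p ^ \<alpha>) a) (W1eps p \<alpha> \<epsilon>)
    \<and> Gamma_trivial (weil (p ^ \<alpha>) a) (W1eps p \<alpha> \<epsilon>) (p ^ \<alpha>)
    \<and> (\<forall>N > 0. Gamma_trivial (weil (p ^ \<alpha>) a) (W1eps p \<alpha> \<epsilon>) N \<longrightarrow> p ^ \<alpha> \<le> N)
    \<and> (\<forall>\<alpha>' a' \<epsilon>'. \<alpha>' \<ge> 1 \<longrightarrow> coprime a' (int p) \<longrightarrow> \<epsilon>' \<in> {1, -1} \<longrightarrow>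
         (iso_mod (weil (p ^ \<alpha>) a) (W1eps p \<alpha> \<epsilon>) (weil (p ^ \<alpha>') a') (W1eps p \<alpha>' \<epsilon>')
          \<longleftrightarrow> p ^ \<alpha> = p ^ \<alpha>' \<and> \<epsilon> = \<epsilon>' \<and> (\<exists>x. [a * a' = x ^ 2] (mod int p))))"
proof -
  have setting: "W1_setting p a' \<alpha>' \<epsilon>'"
    if "coprime a' (int p)" "\<alpha>' \<ge> 1" "\<epsilon>' \<in> {1, -1}" for a' \<alpha>' \<epsilon>'
    using assms that by unfold_locales
  interpret W1_setting p a \<alpha> \<epsilon> by (rule setting[OF assms(4,3,5)])
  show ?thesis
    using W1eps_irreducible Gamma_trivial_level Gamma_trivial_level_le
      iso_mod_W1eps_iff[OF setting[OF assms(4,3,5)] setting] by blast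
qed

end
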